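(* Let $\alpha\in(0,1]$, $d,p\in\mathbb N$ and $f\in C^{3,\alpha}([0,1]^d,\mathbb R^p)$. Then there exists a sequence of deep neural networks $h_n\in C^{2,1}([0,1]^d,\mathbb R^p)$, $n\in\mathbb N$, with ReCU activation such that $\|f-h_n\|_{C^{2,1}([0,1]^d,\mathbb R^p)}\to0$ as $n\to\infty$.
   Context: For $k\in\mathbb N_0$, $C^k([0,1]^d,\mathbb R^m)$ is the set of $f\colon[0,1]^d\to\mathbb R^m$ that are $C^k$ on $(0,1)^d$ with all partial derivatives $\nabla^\gamma f_i$, $|\gamma|\le k$, uniformly continuous on $(0,1)^d$ (hence continuously extended to $[0,1]^d$), with norm $\|f\|_{C^k}=\max_{|\gamma|\le k}\max_i\sup_{x\in[0,1]^d}|\nabla^\gamma f_i(x)|$. For $\alpha\in(0,1]$, $C^{k,\alpha}([0,1]^d,\mathbb R^m)$ consists of $f\in C^k$ with $\|f\|_{C^{k,\alpha}}=\|f\|_{C^k}+\max_{|\gamma|=k}\max_i\sup_{x\ne y\in(0,1)^d}\frac{|\nabla^\gamma f_i(x)-\nabla^\gamma f_i(y)|}{\|x-y\|^\alpha}<\infty$. A neural network with architecture $(l_0,\dots,l_L)\in\mathbb N^{L+1}$ and activation $\sigma$ is a tuple $((W_1,B_1),\dots,(W_L,B_L))$, $W_k\in\mathbb R^{l_k\times l_{k-1}}$, $B_k\in\mathbb R^{l_k}$, realizing $x_0\mapsto W_Lx_{L-1}+B_L$ where $x_k=\sigma(W_kx_{k-1}+B_k)$ for $k=1,\dots,L-1$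 and $\sigma$ acts componentwise. ReCU activation is $\sigma(x)=(\max\{x,0\})^3$; ReLU activation is $\sigma(x)=\max\{x,0\}$. Networks are identified with their realizations restricted to $[0,1]^d$. *)

theory Defs
  imports "HOL-Analysis.Analysis"
begin

text \<open>Points of [0,1]^d are represented as functions nat => real whose
coordinates with index >= d vanish; values in R^p as nat => real read at indices < p.\<close>

definition open_cube :: "nat \<Rightarrow> (nat \<Rightarrow> real) set" where
  "open_cube d = {x. (\<forall>i<d. 0 < x i \<and> x i < 1) \<and> (\<forall>i\<ge>d. x i = 0)}"

definition edist :: "nat \<Rightarrow> (nat \<Rightarrow> real) \<Rightarrow> (nat \<Rightarrow> real) \<Rightarrow> real" where
  "edist d x y = sqrt (\<Sum>i<d. (x i - y i)^2)"

definition pdiff :: "nat \<Rightarrow> ((nat \<Rightarrow> real) \<Rightarrow> real) \<Rightarrow> (nat \<Rightarrow> real) \<Rightarrow> real" where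
  "pdiff i g x = (THE D. ((\<lambda>t. g (x(i := x i + t))) has_real_derivative D) (at 0))"

text \<open>Iterated partial derivative; the list gives the directions (last element applied first).\<close>
fun nabla :: "nat list \<Rightarrow> ((nat \<Rightarrow> real) \<Rightarrow> real) \<Rightarrow> (nat \<Rightarrow> real) \<Rightarrow> real" where
  "nabla [] g = g"
| "nabla (i # is) g = pdiff i (nabla is g)"

definition ucont_on :: "nat \<Rightarrow> (nat \<Rightarrow> real) set \<Rightarrow> ((nat \<Rightarrow> real) \<Rightarrow> real) \<Rightarrow> bool" where
  "ucont_on d U g \<longleftrightarrow> (\<forall>e>0. \<exists>\<delta>>0. \<forall>x\<in>U. \<forall>y\<in>U. edist d x y < \<delta> \<longrightarrow> \<bar>g x - g y\<bar> < e)"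

definition is_Ck :: "nat \<Rightarrow> nat \<Rightarrow> nat \<Rightarrow> ((nat \<Rightarrow> real) \<Rightarrow> (nat \<Rightarrow> real)) \<Rightarrow> bool" where
  "is_Ck d p k f \<longleftrightarrow>
     (\<forall>c<p. \<forall>is. set is \<subseteq> {..<d} \<and> length is \<le> k \<longrightarrow>
        ucont_on d (open_cube d) (nabla is (\<lambda>x. f x c)) \<and>
        (length is < k \<longrightarrow> (\<forall>i<d. \<forall>x\<in>open_cube d.
           ((\<lambda>t. nabla is (\<lambda>x. f x c) (x(i := x i + t))) has_real_derivative
              nabla (i # is) (\<lambda>x. f x c) x) (at 0))))"

text \<open>C^k norm: sup over components, derivatives of order <= k and points
(sup over the open cube equals the sup of the continuous extension over [0,1]^d).\<close>
definition Ck_norm :: "nat \<Rightarrow> nat \<Rightarrow> nat \<Rightarrow> ((nat \<Rightarrow> real) \<Rightarrow> (nat \<Rightarrow> real)) \<Rightarrow> real" where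
  "Ck_norm d p k f = Sup {\<bar>nabla is (\<lambda>x. f x c) x\<bar> | c is x.
      c < p \<and> set is \<subseteq> {..<d} \<and> length is \<le> k \<and> x \<in> open_cube d}"

definition holder_quots :: "nat \<Rightarrow> nat \<Rightarrow> nat \<Rightarrow> real \<Rightarrow> ((nat \<Rightarrow> real) \<Rightarrow> (nat \<Rightarrow> real)) \<Rightarrow> real set" where
  "holder_quots d p k \<alpha> f = {\<bar>nabla is (\<lambda>x. f x c) x - nabla is (\<lambda>x. f x c) y\<bar> / (edist d x y) powr \<alpha> | c is x y.
      c < p \<and> set is \<subseteq> {..<d} \<and> length is = k \<and> x \<in> open_cube d \<and> y \<in> open_cube d \<and> x \<noteq> y}"

definition is_Ck_alpha :: "nat \<Rightarrow> nat \<Rightarrow> nat \<Rightarrow> real \<Rightarrow> ((nat \<Rightarrow> real) \<Rightarrow> (nat \<Rightarrow> real)) \<Rightarrow> bool" where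
  "is_Ck_alpha d p k \<alpha> f \<longleftrightarrow> is_Ck d p k f \<and> bdd_above (holder_quots d p k \<alpha> f)"

definition Ck_alpha_norm :: "nat \<Rightarrow> nat \<Rightarrow> nat \<Rightarrow> real \<Rightarrow> ((nat \<Rightarrow> real) \<Rightarrow> (nat \<Rightarrow> real)) \<Rightarrow> real" where
  "Ck_alpha_norm d p k \<alpha> f = Ck_norm d p k f + Sup (holder_quots d p k \<alpha> f)"

text \<open>Neural networks: architecture (l_0,...,l_L) as a list, layers (W_k,B_k) as a list,
matrices/vectors as functions on indices (only entries with row < l_k, column < l_{k-1} matter).\<close>
type_synonym layer = "(nat \<Rightarrow> nat \<Rightarrow> real) \<times> (nat \<Rightarrow> real)"

definition affine_map :: "nat \<Rightarrow> (nat \<Rightarrow> nat \<Rightarrow> real) \<Rightarrow> (nat \<Rightarrow> real) \<Rightarrow> (nat \<Rightarrow> real) \<Rightarrow> (nat \<Rightarrow> real)" where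
  "affine_map n W B x = (\<lambda>i. (\<Sum>j<n. W i j * x j) + B i)"

fun nn_eval :: "(real \<Rightarrow> real) \<Rightarrow> nat list \<Rightarrow> layer list \<Rightarrow> (nat \<Rightarrow> real) \<Rightarrow> (nat \<Rightarrow> real)" where
  "nn_eval \<sigma> (n # ns) [(W, B)] x = affine_map n W B x"
| "nn_eval \<sigma> (n # ns) ((W, B) # l # ls) x = nn_eval \<sigma> ns (l # ls) (\<lambda>i. \<sigma> (affine_map n W B x i))"
| "nn_eval \<sigma> _ _ x = (\<lambda>_. 0)"

definition nn_arch_ok :: "nat \<Rightarrow> nat \<Rightarrow> nat list \<Rightarrow> layer list \<Rightarrow> bool" where
  "nn_arch_ok d p arch Ls \<longleftrightarrow> Ls \<noteq> [] \<and> length arch = length Ls + 1 \<and>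
     (\<forall>l\<in>set arch. l > 0) \<and> hd arch = d \<and> last arch = p"

definition recu :: "real \<Rightarrow> real" where
  "recu x = (max x 0) ^ 3"

end

theory Submission
  imports Defs "HOL-Real_Asymp.Real_Asymp"
begin

text \<open>
  ReCU networks compute polynomials exactly. Since \<open>recu a - recu (- a) = a\<^sup>3\<close>, the identity is a
  fixed combination of ReCU units applied to \<open>x\<close> and \<open>x \<plusminus> 1\<close>, and by polarization of cubes the
  product \<open>u v\<close> is a combination of eight such units. As networks compose sequentially and in
  parallel, every polynomial in the coordinates, in particular every tensor-product Bernstein
  polynomial, is realized by a ReCU network.

  The Bernstein approximations of \<open>f\<close> of degree \<open>n\<close>, sampled at the interior grid points
  \<open>(k + 1) / (n + 2)\<close>, converge to \<open>f\<close> uniformly on the cube together with all partial derivatives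
  of order at most three: a derivative of a Bernstein polynomial is the Bernstein polynomial of
  finite differences of the samples, these are derivatives of \<open>f\<close> at points near the nodes by the
  mean value theorem, and the Bernstein weights concentrate near \<open>x\<close> by Chebyshev's inequality.
  Finally, the \<open>C\<^sup>2\<^sup>,\<^sup>1\<close> norm of a \<open>C\<^sup>3\<close> function is at most \<open>d + 1\<close> times the supremum of its
  partial derivatives of order at most three, by the mean value theorem along coordinate paths.
\<close>

section \<open>ReCU networks\<close>

lemma recu_odd_part: "recu a - recu (- a) = a ^ 3"
  by (simp add: recu_def max_def)

lemma recu_identity:
  "((recu (s + 1) - recu (- (s + 1))) + (recu (s - 1) - recu (- (s - 1)))
     - 2 * (recu s - recu (- s))) / 6 = s"
  unfolding recu_odd_part by (simp add: algebra_simps power3_eq_cube)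

lemma recu_product:
  "((recu (u + v + 1) - recu (- (u + v + 1))) - (recu (u + v - 1) - recu (- (u + v - 1)))
     - (recu (u - v + 1) - recu (- (u - v + 1))) + (recu (u - v - 1) - recu (- (u - v - 1)))) / 24
   = u * v"
  unfolding recu_odd_part by (simp add: algebra_simps power3_eq_cube)

lemma nn_eval_single: "nn_eval \<sigma> (n # ns) [L] x = affine_map n (fst L) (snd L) x"
  by (cases L) simp

lemma nn_eval_Cons:
  "Ls \<noteq> [] \<Longrightarrow> nn_eval \<sigma> (n # ns) (L # Ls) x = nn_eval \<sigma> ns Ls (\<lambda>i. \<sigma> (affine_map n (fst L) (snd L) x i))"
  by (cases L; cases Ls) auto

lemma nn_eval_input_cong:
  assumes "\<forall>j<hd arch. x j = y j"
  shows "nn_eval \<sigma> arch Ls x = nn_eval \<sigma> arch Ls y"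
proof -
  have "affine_map n W B x = affine_map n W B y" if "\<forall>j<n. x j = y j" for n W B
    using that unfolding affine_map_def by (auto intro!: ext sum.cong)
  with assms show ?thesis
    by (cases arch; cases Ls; cases "tl Ls") (auto simp: nn_eval_single nn_eval_Cons)
qed

definition merge_layers :: "nat \<Rightarrow> layer \<Rightarrow> layer \<Rightarrow> layer" where
  "merge_layers q L1 L2 =
     ((\<lambda>i l. \<Sum>j<q. fst L2 i j * fst L1 j l), (\<lambda>i. (\<Sum>j<q. fst L2 i j * snd L1 j) + snd L2 i))"

lemma affine_map_merge_layers:
  "affine_map q (fst L2) (snd L2) (affine_map d (fst L1) (snd L1) x)
   = affine_map d (fst (merge_layers q L1 L2)) (snd (merge_layers q L1 L2)) x"
  unfolding affine_map_def merge_layers_def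
  by (auto intro!: ext simp: algebra_simps sum_distrib_left sum_distrib_right sum.distrib
      intro: sum.swap)

lemma nn_eval_merge:
  assumes "Ls1 \<noteq> []" "length arch1 = length Ls1 + 1" "Ls2 \<noteq> []" "length arch2 = length Ls2 + 1"
    "hd arch2 = last arch1"
  shows "nn_eval \<sigma> (butlast arch1 @ tl arch2)
           (butlast Ls1 @ merge_layers (last arch1) (last Ls1) (hd Ls2) # tl Ls2) x
         = nn_eval \<sigma> arch2 Ls2 (nn_eval \<sigma> arch1 Ls1 x)"
  using assms
proof (induction Ls1 arbitrary: arch1 x)
  case Nil
  then show ?case by simp
next
  case (Cons L1 Ls1')
  obtain a as1 where a1: "arch1 = a # as1" using Cons.prems by (cases arch1) auto
  obtain L2 Ls2' where l2: "Ls2 = L2 # Ls2'" using Cons.prems by (cases Ls2) auto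
  obtain q as2 where a2: "arch2 = q # as2" using Cons.prems by (cases arch2) auto
  show ?case
  proof (cases Ls1')
    case Nil
    then obtain q' where "as1 = [q']" using Cons.prems a1 by (cases as1) auto
    with Nil show ?thesis using Cons.prems a1 a2 l2
      by (cases Ls2') (simp_all add: nn_eval_single nn_eval_Cons affine_map_merge_layers)
  next
    case (Cons L1' rs)
    have as1: "as1 \<noteq> []" using Cons.prems a1 Cons by auto
    have "nn_eval \<sigma> (butlast arch1 @ tl arch2)
            (butlast (L1 # Ls1') @ merge_layers (last arch1) (last (L1 # Ls1')) (hd Ls2) # tl Ls2) x
          = nn_eval \<sigma> (butlast as1 @ tl arch2)
              (butlast Ls1' @ merge_layers (last as1) (last Ls1') (hd Ls2) # tl Ls2)
              (\<lambda>i. \<sigma> (affine_map a (fst L1) (snd L1) x i))"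
      using a1 as1 Cons by (simp add: nn_eval_Cons)
    also have "\<dots> = nn_eval \<sigma> arch2 Ls2 (nn_eval \<sigma> as1 Ls1' (\<lambda>i. \<sigma> (affine_map a (fst L1) (snd L1) x i)))"
      using Cons.prems a1 as1 Cons by (intro Cons.IH) auto
    also have "nn_eval \<sigma> as1 Ls1' (\<lambda>i. \<sigma> (affine_map a (fst L1) (snd L1) x i)) = nn_eval \<sigma> arch1 (L1 # Ls1') x"
      using a1 Cons by (simp add: nn_eval_Cons)
    finally show ?thesis .
  qed
qed

definition recu_net_depth :: "nat \<Rightarrow> nat \<Rightarrow> nat \<Rightarrow> ((nat \<Rightarrow> real) \<Rightarrow> (nat \<Rightarrow> real)) \<Rightarrow> bool" where
  "recu_net_depth d q L g \<longleftrightarrow> (\<exists>arch Ls. nn_arch_ok d q arch Ls \<and> length Ls = L \<and>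
      (\<forall>x c. c < q \<longrightarrow> nn_eval recu arch Ls x c = g x c))"

lemma recu_net_depth_cong:
  "recu_net_depth d q L g \<Longrightarrow> (\<And>x c. c < q \<Longrightarrow> g x c = g' x c) \<Longrightarrow> recu_net_depth d q L g'"
  unfolding recu_net_depth_def by metis

lemma recu_net_depth_input_cong:
  assumes "recu_net_depth q r L g" "\<forall>j<q. x j = y j" "c < r"
  shows "g x c = g y c"
proof -
  obtain arch Ls where ok: "nn_arch_ok q r arch Ls"
    and ev: "\<forall>x c. c < r \<longrightarrow> nn_eval recu arch Ls x c = g x c"
    using assms(1) unfolding recu_net_depth_def by blast
  have "hd arch = q" using ok unfolding nn_arch_ok_def by simp
  then have "nn_eval recu arch Ls x = nn_eval recu arch Ls y"
    using assms(2) nn_eval_input_cong by metis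
  then show ?thesis using ev assms(3) by metis
qed

lemma recu_net_depth_pos: "recu_net_depth d q L g \<Longrightarrow> 0 < d \<and> 0 < q \<and> 1 \<le> L"
proof -
  assume "recu_net_depth d q L g"
  then obtain arch Ls where ok: "nn_arch_ok d q arch Ls" "length Ls = L"
    unfolding recu_net_depth_def by blast
  then have "arch \<noteq> []" "Ls \<noteq> []" unfolding nn_arch_ok_def by auto
  then show ?thesis using ok unfolding nn_arch_ok_def by (auto simp: Suc_le_eq)
qed

lemma recu_net_depth_comp:
  assumes "recu_net_depth d q L1 g1" "recu_net_depth q r L2 g2"
  shows "recu_net_depth d r (L1 + L2 - 1) (\<lambda>x. g2 (g1 x))"
proof -
  obtain arch1 Ls1 where ok1: "nn_arch_ok d q arch1 Ls1" and len1: "length Ls1 = L1"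
    and ev1: "\<forall>x c. c < q \<longrightarrow> nn_eval recu arch1 Ls1 x c = g1 x c"
    using assms(1) unfolding recu_net_depth_def by blast
  obtain arch2 Ls2 where ok2: "nn_arch_ok q r arch2 Ls2" and len2: "length Ls2 = L2"
    and ev2: "\<forall>x c. c < r \<longrightarrow> nn_eval recu arch2 Ls2 x c = g2 x c"
    using assms(2) unfolding recu_net_depth_def by blast
  define arch where "arch = butlast arch1 @ tl arch2"
  define Ls where "Ls = butlast Ls1 @ merge_layers q (last Ls1) (hd Ls2) # tl Ls2"
  have l1: "Ls1 \<noteq> []" "length arch1 = length Ls1 + 1" "hd arch1 = d" "last arch1 = q"
    "\<forall>l\<in>set arch1. l > 0"
    using ok1 unfolding nn_arch_ok_def by auto
  have l2: "Ls2 \<noteq> []" "length arch2 = length Ls2 + 1" "hd arch2 = q" "last arch2 = r"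
    "\<forall>l\<in>set arch2. l > 0"
    using ok2 unfolding nn_arch_ok_def by auto
  obtain a b as1 where A1: "arch1 = a # b # as1"
    using l1 by (cases arch1; cases "tl arch1") auto
  obtain a' b' as2 where A2: "arch2 = a' # b' # as2"
    using l2 by (cases arch2; cases "tl arch2") auto
  have "set arch \<subseteq> set arch1 \<union> set arch2"
    unfolding arch_def A2 by (auto dest: in_set_butlastD)
  moreover have "hd arch = d" using A1 l1 unfolding arch_def by (cases as1) auto
  moreover have "last arch = r" using A2 l2 unfolding arch_def by simp
  ultimately have "nn_arch_ok d r arch Ls"
    using l1 l2 unfolding nn_arch_ok_def arch_def Ls_def by auto
  moreover have "length Ls = L1 + L2 - 1"
    using l1 l2 len1 len2 unfolding Ls_def by (cases Ls1; cases Ls2) auto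
  moreover have "nn_eval recu arch Ls x c = g2 (g1 x) c" if "c < r" for x c
  proof -
    have "nn_eval recu arch Ls x c = nn_eval recu arch2 Ls2 (nn_eval recu arch1 Ls1 x) c"
      unfolding arch_def Ls_def using l1 l2 nn_eval_merge[of Ls1 arch1 Ls2 arch2] by auto
    also have "\<dots> = g2 (nn_eval recu arch1 Ls1 x) c" using ev2 that by simp
    also have "\<dots> = g2 (g1 x) c" using recu_net_depth_input_cong[OF assms(2) _ that] ev1 by auto
    finally show ?thesis .
  qed
  ultimately show ?thesis unfolding recu_net_depth_def by blast
qed

text \<open>Hidden unit \<open>6 m + t\<close> of the identity network computes the \<open>t\<close>-th ReCU term of
  \<open>recu_identity\<close> for the coordinate \<open>m\<close>.\<close>

lemma recu_net_depth_id:
  assumes "q > 0"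
  shows "recu_net_depth q q 2 (\<lambda>x. x)"
proof -
  define L1 :: layer where "L1 = ((\<lambda>h j. if j = h div 6 then [1,-1,1,-1,1,-1] ! (h mod 6) else 0),
     (\<lambda>h. [1,-1,-1,1,0,0] ! (h mod 6)))"
  define L2 :: layer where "L2 = ((\<lambda>i h. if h div 6 = i then [1/6,-1/6,1/6,-1/6,-1/3,1/3] ! (h mod 6) else 0),
     (\<lambda>_. 0))"
  have "nn_eval recu [q, q * 6, q] [L1, L2] x c = x c" if "c < q" for x c
  proof -
    have hidden: "affine_map q (fst L1) (snd L1) x (m * 6 + t)
        = [1,-1,1,-1,1,-1] ! t * x m + [1,-1,-1,1,0,0] ! t" if "m < q" "t < 6" for m t
      using that unfolding affine_map_def L1_def
      by (simp add: if_distrib[of "\<lambda>u. u * _"] sum.delta' cong: if_cong)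
    have group: "(\<Sum>h<q * 6. G h) = (\<Sum>m<q. \<Sum>t<6. G (m * 6 + t))" for G :: "nat \<Rightarrow> real"
    proof -
      have "sum G {a..<a + 6} = (\<Sum>t<6. G (a + t))" for a
        using sum.shift_bounds_nat_ivl[of G 0 a 6] by (simp add: atLeast0LessThan add.commute)
      then show ?thesis by (simp flip: sum.nat_group)
    qed
    have "nn_eval recu [q, q * 6, q] [L1, L2] x c
        = (\<Sum>h<q * 6. fst L2 c h * recu (affine_map q (fst L1) (snd L1) x h))"
      by (simp add: nn_eval_Cons nn_eval_single affine_map_def L2_def)
    also have "\<dots> = (\<Sum>m<q. \<Sum>t<6. fst L2 c (m * 6 + t) * recu (affine_map q (fst L1) (snd L1) x (m * 6 + t)))"
      by (rule group)
    also have "\<dots> = (\<Sum>m<q. if m = c then (\<Sum>t<6. [1/6,-1/6,1/6,-1/6,-1/3,1/3] ! t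
        * recu ([1,-1,1,-1,1,-1] ! t * x m + [1,-1,-1,1,0,0] ! t)) else 0)"
      by (intro sum.cong refl) (auto simp: hidden L2_def intro!: sum.cong)
    also have "\<dots> = (\<Sum>m<q. if m = c then
        (recu (x m + 1) - recu (- (x m + 1)) + (recu (x m - 1) - recu (- (x m - 1)))
          - 2 * (recu (x m) - recu (- x m))) / 6 else 0)"
      by (simp add: numeral_eq_Suc lessThan_Suc algebra_simps)
    also have "\<dots> = x c" using that recu_identity[of "x c"] by simp
    finally show ?thesis .
  qed
  moreover have "nn_arch_ok q q [q, q * 6, q] [L1, L2]" using assms unfolding nn_arch_ok_def by auto
  ultimately show ?thesis unfolding recu_net_depth_def by (intro exI[of _ "[q, q * 6, q]"] exI) auto
qed

lemma recu_net_depth_mono: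
  assumes "recu_net_depth d q L g" "L \<le> L'"
  shows "recu_net_depth d q L' g"
  using assms(2)
proof (induction L' rule: dec_induct)
  case base
  then show ?case using assms(1) .
next
  case (step L')
  then show ?case
    using recu_net_depth_comp[OF step.IH recu_net_depth_id] recu_net_depth_pos[OF assms(1)] by simp
qed

lemma recu_net_depth_mult: "recu_net_depth 2 1 2 (\<lambda>z c. z 0 * z 1)"
proof -
  define L1 :: layer where "L1 = ((\<lambda>h j. if j = 0 then [1,-1,1,-1,1,-1,1,-1] ! h else [1,-1,1,-1,-1,1,-1,1] ! h),
     (\<lambda>h. [1,-1,-1,1,1,-1,-1,1] ! h))"
  define L2 :: layer where "L2 = ((\<lambda>i h. [1,-1,-1,1,-1,1,1,-1] ! h / 24), (\<lambda>_. 0))"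
  have "nn_eval recu [2, 8, 1] [L1, L2] z c = z 0 * z 1" for z c
  proof -
    have "nn_eval recu [2, 8, 1] [L1, L2] z c
      = ((recu (z 0 + z 1 + 1) - recu (- (z 0 + z 1 + 1))) - (recu (z 0 + z 1 - 1) - recu (- (z 0 + z 1 - 1)))
         - (recu (z 0 - z 1 + 1) - recu (- (z 0 - z 1 + 1))) + (recu (z 0 - z 1 - 1) - recu (- (z 0 - z 1 - 1)))) / 24"
      by (simp add: nn_eval_Cons nn_eval_single affine_map_def L1_def L2_def numeral_eq_Suc lessThan_Suc
          algebra_simps)
    then show ?thesis by (simp only: recu_product)
  qed
  moreover have "nn_arch_ok 2 1 [2, 8, 1] [L1, L2]" unfolding nn_arch_ok_def by auto
  ultimately show ?thesis unfolding recu_net_depth_def by (intro exI[of _ "[2, 8, 1]"] exI) auto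
qed

lemma recu_net_depth_affine:
  assumes "d > 0" "q > 0"
  shows "recu_net_depth d q 1 (affine_map d W B)"
proof -
  have "nn_arch_ok d q [d, q] [(W, B)]" using assms unfolding nn_arch_ok_def by auto
  then show ?thesis unfolding recu_net_depth_def by (intro exI[of _ "[d, q]"] exI[of _ "[(W, B)]"]) auto
qed

definition join_vec :: "nat \<Rightarrow> (nat \<Rightarrow> real) \<Rightarrow> (nat \<Rightarrow> real) \<Rightarrow> (nat \<Rightarrow> real)" where
  "join_vec w z1 z2 = (\<lambda>i. if i < w then z1 i else z2 (i - w))"

lemma join_vec_map: "(\<lambda>i. \<sigma> (join_vec w z1 z2 i)) = join_vec w (\<lambda>i. \<sigma> (z1 i)) (\<lambda>i. \<sigma> (z2 i))"
  unfolding join_vec_def by auto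

definition block_layer :: "nat \<Rightarrow> nat \<Rightarrow> layer \<Rightarrow> layer \<Rightarrow> layer" where
  "block_layer v1 w1 L1 L2 =
     ((\<lambda>i j. if i < v1 then (if j < w1 then fst L1 i j else 0)
            else (if j < w1 then 0 else fst L2 (i - v1) (j - w1))),
      join_vec v1 (snd L1) (snd L2))"

lemma affine_map_block_layer:
  "affine_map (w1 + w2) (fst (block_layer v1 w1 L1 L2)) (snd (block_layer v1 w1 L1 L2)) (join_vec w1 z1 z2)
   = join_vec v1 (affine_map w1 (fst L1) (snd L1) z1) (affine_map w2 (fst L2) (snd L2) z2)"
proof -
  have split: "(\<Sum>j<w1 + w2. G j) = (\<Sum>j<w1. G j) + (\<Sum>j<w2. G (w1 + j))" for G :: "nat \<Rightarrow> real"
    by (induction w2) (simp_all add: add.assoc)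
  show ?thesis unfolding affine_map_def block_layer_def join_vec_def by (rule ext) (simp add: split)
qed

definition shared_layer :: "nat \<Rightarrow> layer \<Rightarrow> layer \<Rightarrow> layer" where
  "shared_layer v1 L1 L2 =
     ((\<lambda>i j. if i < v1 then fst L1 i j else fst L2 (i - v1) j), join_vec v1 (snd L1) (snd L2))"

lemma affine_map_shared_layer:
  "affine_map d (fst (shared_layer v1 L1 L2)) (snd (shared_layer v1 L1 L2)) x
   = join_vec v1 (affine_map d (fst L1) (snd L1) x) (affine_map d (fst L2) (snd L2) x)"
  unfolding affine_map_def shared_layer_def join_vec_def by (rule ext) simp

fun block_layers :: "nat list \<Rightarrow> nat list \<Rightarrow> layer list \<Rightarrow> layer list \<Rightarrow> layer list" where
  "block_layers (w1 # v1 # a1) (w2 # v2 # a2) (L1 # Ls1) (L2 # Ls2) =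
     block_layer v1 w1 L1 L2 # block_layers (v1 # a1) (v2 # a2) Ls1 Ls2"
| "block_layers _ _ _ _ = []"

lemma length_block_layers:
  "length a1 = length Ls1 + 1 \<Longrightarrow> length a2 = length Ls2 + 1 \<Longrightarrow> length Ls1 = length Ls2
   \<Longrightarrow> length (block_layers a1 a2 Ls1 Ls2) = length Ls1"
  by (induction a1 a2 Ls1 Ls2 rule: block_layers.induct) (auto simp: length_Suc_conv)

lemma nn_eval_block_layers:
  assumes "Ls1 \<noteq> []" "length Ls1 = length Ls2" "length a1 = length Ls1 + 1" "length a2 = length Ls2 + 1"
  shows "nn_eval \<sigma> (map2 (+) a1 a2) (block_layers a1 a2 Ls1 Ls2) (join_vec (hd a1) z1 z2)
    = join_vec (last a1) (nn_eval \<sigma> a1 Ls1 z1) (nn_eval \<sigma> a2 Ls2 z2)"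
  using assms
proof (induction Ls1 arbitrary: Ls2 a1 a2 z1 z2)
  case Nil
  then show ?case by simp
next
  case (Cons L1 Ls1')
  obtain L2 Ls2' where l2: "Ls2 = L2 # Ls2'" using Cons.prems by (cases Ls2) auto
  obtain w1 v1 r1 where A1: "a1 = w1 # v1 # r1" using Cons.prems by (cases a1; cases "tl a1") auto
  obtain w2 v2 r2 where A2: "a2 = w2 # v2 # r2" using Cons.prems l2 by (cases a2; cases "tl a2") auto
  show ?case
  proof (cases Ls1')
    case Nil
    then show ?thesis using Cons.prems l2 A1 A2 by (simp add: nn_eval_single affine_map_block_layer)
  next
    case (Cons L1' rs)
    then have ne: "Ls2' \<noteq> []" "r1 \<noteq> []" "r2 \<noteq> []" using Cons.prems l2 A1 A2 by auto
    have "nn_eval \<sigma> (map2 (+) a1 a2) (block_layers a1 a2 (L1 # Ls1') Ls2) (join_vec (hd a1) z1 z2)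
      = nn_eval \<sigma> (map2 (+) (v1 # r1) (v2 # r2)) (block_layers (v1 # r1) (v2 # r2) Ls1' Ls2')
          (join_vec (hd (v1 # r1)) (\<lambda>i. \<sigma> (affine_map w1 (fst L1) (snd L1) z1 i))
             (\<lambda>i. \<sigma> (affine_map w2 (fst L2) (snd L2) z2 i)))"
      using l2 A1 A2 Cons ne
      by (cases Ls2'; cases r1; cases r2) (simp_all add: nn_eval_Cons affine_map_block_layer join_vec_map)
    also have "\<dots> = join_vec (last (v1 # r1))
          (nn_eval \<sigma> (v1 # r1) Ls1' (\<lambda>i. \<sigma> (affine_map w1 (fst L1) (snd L1) z1 i)))
          (nn_eval \<sigma> (v2 # r2) Ls2' (\<lambda>i. \<sigma> (affine_map w2 (fst L2) (snd L2) z2 i)))"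
      using Cons.prems l2 A1 A2 Cons by (intro Cons.IH) auto
    finally show ?thesis using l2 A1 A2 Cons ne by (simp add: nn_eval_Cons)
  qed
qed

lemma nn_eval_shared_block_layers:
  assumes "length t1 = length Ls1 + 1" "length t2 = length Ls2 + 1" "length Ls1 = length Ls2"
  shows "nn_eval \<sigma> (d # map2 (+) t1 t2) (shared_layer (hd t1) L1 L2 # block_layers t1 t2 Ls1 Ls2) x
    = join_vec (last t1) (nn_eval \<sigma> (d # t1) (L1 # Ls1) x) (nn_eval \<sigma> (d # t2) (L2 # Ls2) x)"
proof (cases "Ls1 = []")
  case True
  then obtain a b where "t1 = [a]" "t2 = [b]" "Ls2 = []" using assms by (auto simp: length_Suc_conv)
  then show ?thesis using True by (simp add: nn_eval_single affine_map_shared_layer)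
next
  case False
  then have ne: "Ls2 \<noteq> []" "block_layers t1 t2 Ls1 Ls2 \<noteq> []"
    using assms length_block_layers[OF assms(1,2,3)] by auto
  have "nn_eval \<sigma> (d # map2 (+) t1 t2) (shared_layer (hd t1) L1 L2 # block_layers t1 t2 Ls1 Ls2) x
      = nn_eval \<sigma> (map2 (+) t1 t2) (block_layers t1 t2 Ls1 Ls2)
          (join_vec (hd t1) (\<lambda>i. \<sigma> (affine_map d (fst L1) (snd L1) x i))
             (\<lambda>i. \<sigma> (affine_map d (fst L2) (snd L2) x i)))"
    by (simp add: nn_eval_Cons[OF ne(2)] affine_map_shared_layer join_vec_map)
  also have "\<dots> = join_vec (last t1) (nn_eval \<sigma> t1 Ls1 (\<lambda>i. \<sigma> (affine_map d (fst L1) (snd L1) x i)))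
      (nn_eval \<sigma> t2 Ls2 (\<lambda>i. \<sigma> (affine_map d (fst L2) (snd L2) x i)))"
    using False assms by (intro nn_eval_block_layers) auto
  finally show ?thesis using False ne by (simp add: nn_eval_Cons)
qed

text \<open>Parallel composition of two networks of equal depth: their first layers share the input,
  all later layers act block-diagonally.\<close>

lemma recu_net_depth_join:
  assumes "recu_net_depth d q1 L g1" "recu_net_depth d q2 L g2"
  shows "recu_net_depth d (q1 + q2) L (\<lambda>x. join_vec q1 (g1 x) (g2 x))"
proof -
  obtain arch1 Ls1 where ok1: "nn_arch_ok d q1 arch1 Ls1" and len1: "length Ls1 = L"
    and ev1: "\<forall>x c. c < q1 \<longrightarrow> nn_eval recu arch1 Ls1 x c = g1 x c"
    using assms(1) unfolding recu_net_depth_def by blast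
  obtain arch2 Ls2 where ok2: "nn_arch_ok d q2 arch2 Ls2" and len2: "length Ls2 = L"
    and ev2: "\<forall>x c. c < q2 \<longrightarrow> nn_eval recu arch2 Ls2 x c = g2 x c"
    using assms(2) unfolding recu_net_depth_def by blast
  obtain L1 Ls1' t1 where LL1: "Ls1 = L1 # Ls1'" and A1: "arch1 = d # t1"
    using ok1 unfolding nn_arch_ok_def by (cases Ls1; cases arch1) auto
  obtain L2 Ls2' t2 where LL2: "Ls2 = L2 # Ls2'" and A2: "arch2 = d # t2"
    using ok2 unfolding nn_arch_ok_def by (cases Ls2; cases arch2) auto
  have t: "length t1 = L" "length t2 = L" "t1 \<noteq> []" "t2 \<noteq> []" "last t1 = q1" "last t2 = q2"
    "\<forall>l\<in>set t1. l > 0" "\<forall>l\<in>set t2. l > 0"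
    using ok1 ok2 A1 A2 len1 len2 LL1 unfolding nn_arch_ok_def by auto
  define arch where "arch = d # map2 (+) t1 t2"
  define Ls where "Ls = shared_layer (hd t1) L1 L2 # block_layers t1 t2 Ls1' Ls2'"
  have lenb: "length (block_layers t1 t2 Ls1' Ls2') = length Ls1'"
    using t len1 len2 LL1 LL2 by (intro length_block_layers) auto
  have "last (map2 (+) t1 t2) = q1 + q2"
    using t by (simp add: last_map last_zip)
  then have ok: "nn_arch_ok d (q1 + q2) arch Ls"
    using t lenb len1 LL1 recu_net_depth_pos[OF assms(1)]
    unfolding nn_arch_ok_def arch_def Ls_def by (auto simp: set_zip)
  have ev: "nn_eval recu arch Ls x = join_vec q1 (nn_eval recu arch1 Ls1 x) (nn_eval recu arch2 Ls2 x)" for x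
    unfolding arch_def Ls_def A1 A2 LL1 LL2 using t len1 len2 LL1 LL2
    by (subst nn_eval_shared_block_layers) auto
  have "length Ls = L" using LL1 len1 lenb unfolding Ls_def by simp
  moreover have "\<forall>x c. c < q1 + q2 \<longrightarrow> nn_eval recu arch Ls x c = join_vec q1 (g1 x) (g2 x) c"
    using ev1 ev2 unfolding ev join_vec_def by auto
  ultimately show ?thesis using ok unfolding recu_net_depth_def by blast
qed

definition recu_net :: "nat \<Rightarrow> nat \<Rightarrow> ((nat \<Rightarrow> real) \<Rightarrow> (nat \<Rightarrow> real)) \<Rightarrow> bool" where
  "recu_net d q g \<longleftrightarrow> (\<exists>L. recu_net_depth d q L g)"

lemma recu_net_cong: "recu_net d q g \<Longrightarrow> (\<And>x c. c < q \<Longrightarrow> g x c = g' x c) \<Longrightarrow> recu_net d q g'"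
  unfolding recu_net_def using recu_net_depth_cong by blast

lemma recu_net_join:
  assumes "recu_net d q1 g1" "recu_net d q2 g2"
  shows "recu_net d (q1 + q2) (\<lambda>x. join_vec q1 (g1 x) (g2 x))"
proof -
  obtain L1 L2 where "recu_net_depth d q1 L1 g1" "recu_net_depth d q2 L2 g2"
    using assms unfolding recu_net_def by blast
  then have "recu_net_depth d q1 (max L1 L2) g1" "recu_net_depth d q2 (max L1 L2) g2"
    by (auto intro: recu_net_depth_mono)
  then show ?thesis unfolding recu_net_def using recu_net_depth_join by blast
qed

lemma recu_net_comp: "recu_net d q g1 \<Longrightarrow> recu_net q r g2 \<Longrightarrow> recu_net d r (\<lambda>x. g2 (g1 x))"
  unfolding recu_net_def using recu_net_depth_comp by blast

definition recu_realizable :: "nat \<Rightarrow> ((nat \<Rightarrow> real) \<Rightarrow> real) \<Rightarrow> bool" where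
  "recu_realizable d g \<longleftrightarrow> recu_net d 1 (\<lambda>x c. g x)"

lemma recu_realizable_const: "d > 0 \<Longrightarrow> recu_realizable d (\<lambda>x. a)"
  unfolding recu_realizable_def recu_net_def
  using recu_net_depth_affine[of d 1 "\<lambda>_ _. 0" "\<lambda>_. a"]
  by (intro exI[of _ 1]) (auto elim!: recu_net_depth_cong simp: affine_map_def)

lemma recu_realizable_coord: "i < d \<Longrightarrow> recu_realizable d (\<lambda>x. x i)"
  unfolding recu_realizable_def recu_net_def
  using recu_net_depth_affine[of d 1 "\<lambda>_ j. if j = i then 1 else 0" "\<lambda>_. 0"]
  by (intro exI[of _ 1])
    (auto elim!: recu_net_depth_cong simp: affine_map_def if_distrib[of "\<lambda>u. u * _"] cong: if_cong)

lemma recu_realizable_binop: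
  assumes "recu_realizable d g1" "recu_realizable d g2" "recu_net 2 1 h"
  shows "recu_net d 1 (\<lambda>x. h (join_vec 1 (\<lambda>_. g1 x) (\<lambda>_. g2 x)))"
proof -
  have "recu_net d (1 + 1) (\<lambda>x. join_vec 1 (\<lambda>_. g1 x) (\<lambda>_. g2 x))"
    using recu_net_join assms(1,2) unfolding recu_realizable_def .
  then show ?thesis using recu_net_comp assms(3) by (simp add: numeral_2_eq_2)
qed

lemma recu_realizable_add:
  assumes "recu_realizable d g1" "recu_realizable d g2"
  shows "recu_realizable d (\<lambda>x. g1 x + g2 x)"
proof -
  have "recu_net 2 1 (affine_map 2 (\<lambda>_ _. 1) (\<lambda>_. 0))"
    using recu_net_depth_affine[of 2 1] unfolding recu_net_def by auto
  from recu_realizable_binop[OF assms this] show ?thesis unfolding recu_realizable_def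
    by (rule recu_net_cong) (simp add: affine_map_def join_vec_def numeral_2_eq_2 lessThan_Suc)
qed

lemma recu_realizable_mult:
  assumes "recu_realizable d g1" "recu_realizable d g2"
  shows "recu_realizable d (\<lambda>x. g1 x * g2 x)"
proof -
  have "recu_net 2 1 (\<lambda>z c. z 0 * z 1)" using recu_net_depth_mult unfolding recu_net_def by auto
  from recu_realizable_binop[OF assms this] show ?thesis unfolding recu_realizable_def
    by (rule recu_net_cong) (simp add: join_vec_def)
qed

lemma recu_realizable_sum:
  "finite A \<Longrightarrow> d > 0 \<Longrightarrow> (\<And>a. a \<in> A \<Longrightarrow> recu_realizable d (g a))
   \<Longrightarrow> recu_realizable d (\<lambda>x. \<Sum>a\<in>A. g a x)"
  by (induction A rule: finite_induct) (auto intro: recu_realizable_const recu_realizable_add)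

lemma recu_realizable_prod:
  "finite A \<Longrightarrow> d > 0 \<Longrightarrow> (\<And>a. a \<in> A \<Longrightarrow> recu_realizable d (g a))
   \<Longrightarrow> recu_realizable d (\<lambda>x. \<Prod>a\<in>A. g a x)"
  by (induction A rule: finite_induct) (auto intro: recu_realizable_const recu_realizable_mult)

lemma recu_realizable_power: "d > 0 \<Longrightarrow> recu_realizable d g \<Longrightarrow> recu_realizable d (\<lambda>x. g x ^ n)"
  by (induction n) (auto intro: recu_realizable_const recu_realizable_mult)

lemma recu_net_components:
  assumes "p > 0" "\<And>c. c < p \<Longrightarrow> recu_realizable d (G c)"
  shows "recu_net d p (\<lambda>x c. G c x)"
  using assms
proof (induction p rule: nat_induct_non_zero)
  case 1
  then show ?case unfolding recu_realizable_def by (auto elim!: recu_net_cong)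
next
  case (Suc n)
  then have "recu_net d (n + 1) (\<lambda>x. join_vec n (\<lambda>c. G c x) (\<lambda>_. G n x))"
    unfolding recu_realizable_def by (intro recu_net_join) auto
  then show ?case by (auto elim!: recu_net_cong simp: join_vec_def less_Suc_eq)
qed

section \<open>Tensor-product Bernstein polynomials\<close>

lemma has_real_derivative_Bernstein:
  assumes "r \<le> Suc N"
  shows "(Bernstein (Suc N) r has_real_derivative
     (if r = 0 then 0 else real (Suc N) * Bernstein N (r - 1) s)
     - (if r = Suc N then 0 else real (Suc N) * Bernstein N r s)) (at s)"
proof -
  have d: "((\<lambda>s. real (Suc N choose r) * (s ^ r * (1 - s) ^ (Suc N - r))) has_real_derivative
     real (Suc N choose r) * ((real r * s ^ (r - 1)) * (1 - s) ^ (Suc N - r)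
       + s ^ r * (real (Suc N - r) * (1 - s) ^ (Suc N - r - 1) * (- 1)))) (at s)"
    by (intro DERIV_cmult DERIV_mult DERIV_pow derivative_eq_intros refl) (auto intro!: derivative_eq_intros)
  have "Bernstein (Suc N) r = (\<lambda>s. real (Suc N choose r) * (s ^ r * (1 - s) ^ (Suc N - r)))"
    by (auto simp: Bernstein_def fun_eq_iff)
  moreover consider "r = 0" | "r = Suc N" | "0 < r" "r < Suc N" using assms by linarith
  then have "real (Suc N choose r) * ((real r * s ^ (r - 1)) * (1 - s) ^ (Suc N - r)
       + s ^ r * (real (Suc N - r) * (1 - s) ^ (Suc N - r - 1) * (- 1)))
    = (if r = 0 then 0 else real (Suc N) * Bernstein N (r - 1) s)
      - (if r = Suc N then 0 else real (Suc N) * Bernstein N r s)"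
  proof cases
    case 3
    have c1: "real r * real (Suc N choose r) = real (Suc N) * real (N choose (r - 1))"
      using times_binomial_minus1_eq[of r "Suc N"] 3 by (metis diff_Suc_1 of_nat_mult)
    have c2: "real (Suc N - r) * real (Suc N choose r) = real (Suc N) * real (N choose r)"
      using binomial_absorb_comp[of "Suc N" r] by (metis diff_Suc_1 of_nat_mult)
    have e: "N - (r - 1) = Suc N - r" "N - r = Suc N - r - 1" using 3 by auto
    have "real (Suc N choose r) * ((real r * s ^ (r - 1)) * (1 - s) ^ (Suc N - r)
        + s ^ r * (real (Suc N - r) * (1 - s) ^ (Suc N - r - 1) * (- 1)))
      = (real r * real (Suc N choose r)) * s ^ (r - 1) * (1 - s) ^ (Suc N - r)
        - (real (Suc N - r) * real (Suc N choose r)) * s ^ r * (1 - s) ^ (Suc N - r - 1)"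
      by (simp add: algebra_simps)
    also have "\<dots> = real (Suc N) * Bernstein N (r - 1) s - real (Suc N) * Bernstein N r s"
      unfolding c1 c2 Bernstein_def e by (simp add: algebra_simps)
    finally show ?thesis using 3 by simp
  qed (simp_all add: Bernstein_def)
  ultimately show ?thesis using d by simp
qed

lemma has_real_derivative_Bernstein_sum:
  "((\<lambda>s. \<Sum>r\<le>M. c r * Bernstein M r s) has_real_derivative
     (\<Sum>r\<le>M - 1. real M * (c (Suc r) - c r) * Bernstein (M - 1) r s)) (at s)"
proof (cases M)
  case 0
  then show ?thesis by (simp add: Bernstein_def)
next
  case (Suc N)
  have "((\<lambda>s. \<Sum>r\<le>Suc N. c r * Bernstein (Suc N) r s) has_real_derivative
     (\<Sum>r\<le>Suc N. c r * (if r = 0 then 0 else real (Suc N) * Bernstein N (r - 1) s))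
     - (\<Sum>r\<le>Suc N. c r * (if r = Suc N then 0 else real (Suc N) * Bernstein N r s))) (at s)"
    unfolding sum_subtractf[symmetric] right_diff_distrib[symmetric]
    by (intro DERIV_sum DERIV_cmult has_real_derivative_Bernstein) auto
  also have "(\<Sum>r\<le>Suc N. c r * (if r = 0 then 0 else real (Suc N) * Bernstein N (r - 1) s))
      = (\<Sum>r\<le>N. c (Suc r) * (real (Suc N) * Bernstein N r s))"
    by (subst sum.atMost_Suc_shift) simp
  also have "(\<Sum>r\<le>Suc N. c r * (if r = Suc N then 0 else real (Suc N) * Bernstein N r s))
      = (\<Sum>r\<le>N. c r * (real (Suc N) * Bernstein N r s))"
    by (subst sum.atMost_Suc) (auto intro!: sum.cong)
  finally show ?thesis using Suc by (simp add: sum_subtractf[symmetric] algebra_simps)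
qed

lemma sum_PiE_split:
  assumes "j \<in> I"
  shows "(\<Sum>k\<in>Pi\<^sub>E I S. G k) = (\<Sum>r\<in>S j. \<Sum>k\<in>Pi\<^sub>E (I - {j}) S. G (k(j := r)))"
proof -
  have "(\<Sum>k\<in>Pi\<^sub>E I S. G k) = (\<Sum>(r, k)\<in>S j \<times> Pi\<^sub>E (I - {j}) S. G (k(j := r)))"
    using assms
    by (intro sum.reindex_bij_witness[of _ "\<lambda>(r, k). k(j := r)" "\<lambda>k. (k j, k(j := undefined))"])
      (auto simp: PiE_def extensional_def)
  then show ?thesis by (simp add: sum.cartesian_product)
qed

text \<open>The pair \<open>(m, a)\<close> holds the degrees \<open>m i\<close> in the coordinates \<open>i < d\<close> and the coefficients.\<close>

definition bernstein_poly :: "nat \<Rightarrow> (nat \<Rightarrow> nat) \<times> ((nat \<Rightarrow> nat) \<Rightarrow> real) \<Rightarrow> (nat \<Rightarrow> real) \<Rightarrow> real" where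
  "bernstein_poly d ma x =
     (\<Sum>k\<in>(\<Pi>\<^sub>E i\<in>{..<d}. {..fst ma i}). snd ma k * (\<Prod>i<d. Bernstein (fst ma i) (k i) (x i)))"

lemma bernstein_poly_split:
  assumes "j < d"
  shows "bernstein_poly d (m, a) y = (\<Sum>r\<le>m j. Bernstein (m j) r (y j) *
     (\<Sum>k\<in>(\<Pi>\<^sub>E i\<in>{..<d} - {j}. {..m i}). a (k(j := r)) * (\<Prod>i\<in>{..<d} - {j}. Bernstein (m i) (k i) (y i))))"
proof -
  have "(\<Prod>i<d. Bernstein (m i) ((k(j := r)) i) (y i))
      = Bernstein (m j) r (y j) * (\<Prod>i\<in>{..<d} - {j}. Bernstein (m i) (k i) (y i))" for k r
    using assms by (subst prod.remove[of _ j]) (auto intro!: prod.cong)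
  then show ?thesis unfolding bernstein_poly_def using assms
    by (subst sum_PiE_split[of j]) (simp_all add: sum_distrib_left mult.left_commute)
qed

definition diff_coeffs ::
  "nat \<Rightarrow> (nat \<Rightarrow> nat) \<times> ((nat \<Rightarrow> nat) \<Rightarrow> real) \<Rightarrow> (nat \<Rightarrow> nat) \<times> ((nat \<Rightarrow> nat) \<Rightarrow> real)" where
  "diff_coeffs j ma = ((fst ma)(j := fst ma j - 1),
     \<lambda>k. real (fst ma j) * (snd ma (k(j := Suc (k j))) - snd ma k))"

lemma has_pderiv_bernstein_poly:
  assumes "j < d"
  shows "((\<lambda>t. bernstein_poly d ma (x(j := x j + t))) has_real_derivative
           bernstein_poly d (diff_coeffs j ma) x) (at 0)"
proof -
  obtain m a where ma: "ma = (m, a)" by fastforce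
  define K where "K = (\<Pi>\<^sub>E i\<in>{..<d} - {j}. {..m i})"
  define R where "R r = (\<Sum>k\<in>K. a (k(j := r)) * (\<Prod>i\<in>{..<d} - {j}. Bernstein (m i) (k i) (x i)))" for r
  have eq: "bernstein_poly d ma (x(j := x j + t)) = (\<Sum>r\<le>m j. R r * Bernstein (m j) r (t + x j))" for t
    unfolding ma bernstein_poly_split[OF assms] R_def K_def
    by (auto simp: mult.commute add.commute intro!: sum.cong prod.cong)
  have "((\<lambda>s. \<Sum>r\<le>m j. R r * Bernstein (m j) r s) has_real_derivative
     (\<Sum>r\<le>m j - 1. real (m j) * (R (Suc r) - R r) * Bernstein (m j - 1) r (0 + x j))) (at (0 + x j))"
    by (rule has_real_derivative_Bernstein_sum)
  then have "((\<lambda>t. bernstein_poly d ma (x(j := x j + t))) has_real_derivative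
     (\<Sum>r\<le>m j - 1. real (m j) * (R (Suc r) - R r) * Bernstein (m j - 1) r (x j))) (at 0)"
    unfolding eq by (subst (asm) DERIV_shift) simp
  moreover have "(\<Pi>\<^sub>E i\<in>{..<d} - {j}. {..(m(j := m j - 1)) i}) = K"
    unfolding K_def by (intro PiE_cong) auto
  then have "bernstein_poly d (diff_coeffs j ma) x
     = (\<Sum>r\<le>m j - 1. real (m j) * (R (Suc r) - R r) * Bernstein (m j - 1) r (x j))"
    unfolding ma diff_coeffs_def fst_conv snd_conv bernstein_poly_split[OF assms] R_def
    by (auto intro!: sum.cong prod.cong simp: sum_distrib_left sum_subtractf algebra_simps)
  ultimately show ?thesis by simp
qed

lemma pdiff_eqI: "((\<lambda>t. g (x(i := x i + t))) has_real_derivative D) (at 0) \<Longrightarrow> pdiff i g x = D"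
  unfolding pdiff_def by (rule the_equality) (auto intro: DERIV_unique)

fun nabla_coeffs ::
  "nat list \<Rightarrow> (nat \<Rightarrow> nat) \<times> ((nat \<Rightarrow> nat) \<Rightarrow> real) \<Rightarrow> (nat \<Rightarrow> nat) \<times> ((nat \<Rightarrow> nat) \<Rightarrow> real)" where
  "nabla_coeffs [] ma = ma"
| "nabla_coeffs (j # js) ma = diff_coeffs j (nabla_coeffs js ma)"

lemma nabla_bernstein_poly:
  "set js \<subseteq> {..<d} \<Longrightarrow> nabla js (bernstein_poly d ma) = bernstein_poly d (nabla_coeffs js ma)"
  by (induction js) (auto intro!: ext pdiff_eqI has_pderiv_bernstein_poly)

lemma diff_coeffs_commute: "diff_coeffs i (diff_coeffs j ma) = diff_coeffs j (diff_coeffs i ma)"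
proof (cases "i = j")
  case False
  then have "k(i := Suc (k i), j := Suc (k j)) = k(j := Suc (k j), i := Suc (k i))" for k :: "nat \<Rightarrow> nat"
    by (rule fun_upd_twist)
  with False show ?thesis unfolding diff_coeffs_def
    by (auto simp: fun_upd_twist algebra_simps fun_eq_iff)
qed simp

lemma nabla_coeffs_rev: "nabla_coeffs (rev js) ma = nabla_coeffs js ma"
proof -
  have append: "nabla_coeffs (xs @ ys) ma = nabla_coeffs xs (nabla_coeffs ys ma)" for xs ys ma
    by (induction xs) auto
  have "diff_coeffs j (nabla_coeffs xs ma) = nabla_coeffs xs (diff_coeffs j ma)" for j xs ma
    by (induction xs) (auto simp: diff_coeffs_commute)
  then show ?thesis by (induction js arbitrary: ma) (auto simp: append)
qed

lemma fst_nabla_coeffs: "fst (nabla_coeffs js (m, a)) = (\<lambda>i. m i - count_list js i)"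
  by (induction js) (auto simp: diff_coeffs_def)

text \<open>The factor \<open>m (m - 1) \<dots>\<close> by which differentiation along \<open>js\<close> multiplies the finite
  differences of the coefficients.\<close>

fun degree_factor :: "nat list \<Rightarrow> (nat \<Rightarrow> nat) \<Rightarrow> real" where
  "degree_factor [] m = 1"
| "degree_factor (j # js) m = real (m j - count_list js j) * degree_factor js m"

definition fwd_diff :: "nat \<Rightarrow> real \<Rightarrow> ((nat \<Rightarrow> real) \<Rightarrow> real) \<Rightarrow> ((nat \<Rightarrow> real) \<Rightarrow> real)" where
  "fwd_diff j h F = (\<lambda>y. F (y(j := y j + h)) - F y)"

fun iter_fwd_diff :: "nat list \<Rightarrow> real \<Rightarrow> ((nat \<Rightarrow> real) \<Rightarrow> real) \<Rightarrow> ((nat \<Rightarrow> real) \<Rightarrow> real)" where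
  "iter_fwd_diff [] h F = F"
| "iter_fwd_diff (j # js) h F = iter_fwd_diff js h (fwd_diff j h F)"

lemma iter_fwd_diff_snoc: "iter_fwd_diff (js @ [j]) h F = fwd_diff j h (iter_fwd_diff js h F)"
  by (induction js arbitrary: F) auto

text \<open>The nodes are shifted into the interior so that finite differences of step \<open>1 / (n + 2)\<close>
  up to order three stay inside the open cube.\<close>

definition bernstein_node :: "nat \<Rightarrow> nat \<Rightarrow> (nat \<Rightarrow> nat) \<Rightarrow> (nat \<Rightarrow> real)" where
  "bernstein_node n d k = (\<lambda>i. if i < d then real (k i + 1) / real (n + 2) else 0)"

lemma snd_nabla_coeffs_node:
  "set js \<subseteq> {..<d} \<Longrightarrow>
   snd (nabla_coeffs js (m, \<lambda>k. F (bernstein_node n d k))) k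
   = degree_factor js m * iter_fwd_diff (rev js) (1 / real (n + 2)) F (bernstein_node n d k)"
proof (induction js arbitrary: k)
  case (Cons j js)
  then have "bernstein_node n d (k(j := Suc (k j)))
      = (bernstein_node n d k)(j := bernstein_node n d k j + 1 / real (n + 2))"
    unfolding bernstein_node_def by (auto simp: fun_eq_iff add_divide_distrib)
  with Cons show ?case
    by (simp add: diff_coeffs_def fst_nabla_coeffs iter_fwd_diff_snoc fwd_diff_def algebra_simps)
qed simp

section \<open>Partial derivatives and finite differences\<close>

lemma DERIV_along_coord:
  assumes "((\<lambda>s. G (y(j := y j + s))) has_real_derivative D) (at 0)"
  shows "((\<lambda>t. G (y(j := t))) has_real_derivative D) (at (y j))"
  using assms DERIV_shift[of "\<lambda>t. G (y(j := t))" D 0 "y j"] by (simp add: add.commute)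

definition coord_open :: "nat \<Rightarrow> (nat \<Rightarrow> real) set \<Rightarrow> bool" where
  "coord_open d U \<longleftrightarrow> (\<forall>z\<in>U. \<forall>i<d. \<exists>e>0. \<forall>t. \<bar>t\<bar> < e \<longrightarrow> z(i := z i + t) \<in> U)"

definition has_partials :: "nat \<Rightarrow> (nat \<Rightarrow> real) set \<Rightarrow> nat \<Rightarrow> ((nat \<Rightarrow> real) \<Rightarrow> real) \<Rightarrow> bool" where
  "has_partials d U r F \<longleftrightarrow> (\<forall>is. length is < r \<longrightarrow> set is \<subseteq> {..<d} \<longrightarrow>
     (\<forall>z\<in>U. \<forall>i<d. ((\<lambda>t. nabla is F (z(i := z i + t))) has_real_derivative nabla (i # is) F z) (at 0)))"

lemma has_partialsD:
  "has_partials d U r F \<Longrightarrow> length is < r \<Longrightarrow> set is \<subseteq> {..<d} \<Longrightarrow> z \<in> U \<Longrightarrow> i < d \<Longrightarrow>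
   ((\<lambda>t. nabla is F (z(i := z i + t))) has_real_derivative nabla (i # is) F z) (at 0)"
  unfolding has_partials_def by blast

lemma has_partials_mono:
  "has_partials d U r F \<Longrightarrow> U' \<subseteq> U \<Longrightarrow> r' \<le> r \<Longrightarrow> has_partials d U' r' F"
  unfolding has_partials_def by (meson less_le_trans subsetD)

lemma has_partials_bernstein_poly: "has_partials d U r (bernstein_poly d ma)"
  unfolding has_partials_def
proof (intro allI impI ballI)
  fix "is" z i assume "set is \<subseteq> {..<d}" "i < d"
  then show "((\<lambda>t. nabla is (bernstein_poly d ma) (z(i := z i + t))) has_real_derivative
      nabla (i # is) (bernstein_poly d ma) z) (at 0)"
    using has_pderiv_bernstein_poly[of i d "nabla_coeffs is ma" z]
    by (simp only: nabla_bernstein_poly set_simps insert_subset lessThan_iff nabla_coeffs.simps)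
qed

lemma has_pderiv_local:
  assumes "coord_open d U" "z \<in> U" "i < d" "\<And>w. w \<in> U \<Longrightarrow> G w = H w"
    "((\<lambda>t. H (z(i := z i + t))) has_real_derivative D) (at 0)"
  shows "((\<lambda>t. G (z(i := z i + t))) has_real_derivative D) (at 0)"
proof -
  obtain e where e: "e > 0" "\<And>t. \<bar>t\<bar> < e \<Longrightarrow> z(i := z i + t) \<in> U"
    using assms(1-3) unfolding coord_open_def by blast
  have "eventually (\<lambda>t. G (z(i := z i + t)) = H (z(i := z i + t))) (nhds 0)"
    unfolding eventually_nhds_metric using e assms(4) by (intro exI[of _ e]) (auto simp: dist_real_def)
  then show ?thesis using assms(5) DERIV_cong_ev by fastforce
qed

lemma nabla_diff:
  assumes "coord_open d U" "has_partials d U r F1" "has_partials d U r F2"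
  shows "length is \<le> r \<Longrightarrow> set is \<subseteq> {..<d} \<Longrightarrow> z \<in> U \<Longrightarrow>
    nabla is (\<lambda>w. F1 w - F2 w) z = nabla is F1 z - nabla is F2 z"
proof (induction "is" arbitrary: z)
  case (Cons i "is")
  then have z: "z \<in> U" "i < d" by auto
  have IH: "\<And>w. w \<in> U \<Longrightarrow> nabla is (\<lambda>w. F1 w - F2 w) w = nabla is F1 w - nabla is F2 w"
    using Cons by simp
  have "((\<lambda>t. nabla is F1 (z(i := z i + t)) - nabla is F2 (z(i := z i + t))) has_real_derivative
      nabla (i # is) F1 z - nabla (i # is) F2 z) (at 0)"
    using Cons.prems by (intro DERIV_diff has_partialsD[OF assms(2)] has_partialsD[OF assms(3)]) auto
  from has_pderiv_local[OF assms(1) z IH this] show ?case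
    unfolding nabla.simps(2) by (rule pdiff_eqI)
qed simp

lemma has_partials_diff:
  assumes "coord_open d U" "has_partials d U r F1" "has_partials d U r F2"
  shows "has_partials d U r (\<lambda>w. F1 w - F2 w)"
  unfolding has_partials_def
proof (intro allI impI ballI)
  fix "is" z i assume a: "length is < r" "set is \<subseteq> {..<d}" "z \<in> U" "i < d"
  have IH: "\<And>w. w \<in> U \<Longrightarrow> nabla is (\<lambda>w. F1 w - F2 w) w = nabla is F1 w - nabla is F2 w"
    using a by (intro nabla_diff[OF assms]) auto
  have "((\<lambda>t. nabla is F1 (z(i := z i + t)) - nabla is F2 (z(i := z i + t))) has_real_derivative
      nabla (i # is) F1 z - nabla (i # is) F2 z) (at 0)"
    using a by (intro DERIV_diff has_partialsD[OF assms(2)] has_partialsD[OF assms(3)]) auto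
  moreover have "nabla (i # is) (\<lambda>w. F1 w - F2 w) z = nabla (i # is) F1 z - nabla (i # is) F2 z"
    using a by (intro nabla_diff[OF assms]) auto
  ultimately show "((\<lambda>t. nabla is (\<lambda>w. F1 w - F2 w) (z(i := z i + t))) has_real_derivative
      nabla (i # is) (\<lambda>w. F1 w - F2 w) z) (at 0)"
    using has_pderiv_local[OF assms(1) a(3,4) IH] by (simp only:)
qed

lemma shift_coord_commute:
  fixes x :: "nat \<Rightarrow> real"
  shows "(x(i := x i + t))(j := (x(i := x i + t)) j + h) = (x(j := x j + h))(i := (x(j := x j + h)) i + t)"
proof (cases "i = j")
  case True
  then show ?thesis by (simp add: add.assoc add.commute[of t h])
qed (simp add: fun_upd_twist)

lemma nabla_shift: "nabla is (\<lambda>w. F (w(j := w j + h))) = (\<lambda>w. nabla is F (w(j := w j + h)))"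
proof (induction "is")
  case (Cons i "is")
  show ?case unfolding nabla.simps Cons pdiff_def shift_coord_commute ..
qed simp

lemma has_partials_shift:
  assumes "has_partials d U r F" "\<And>w. w \<in> U' \<Longrightarrow> w(j := w j + h) \<in> U"
  shows "has_partials d U' r (\<lambda>w. F (w(j := w j + h)))"
  unfolding has_partials_def nabla_shift
proof (intro allI impI ballI)
  fix "is" z i assume a: "length is < r" "set is \<subseteq> {..<d}" "z \<in> U'" "i < d"
  have "((\<lambda>t. nabla is F ((z(j := z j + h))(i := (z(j := z j + h)) i + t))) has_real_derivative
      nabla (i # is) F (z(j := z j + h))) (at 0)"
    using has_partialsD[OF assms(1) a(1,2) assms(2)[OF a(3)] a(4)] .
  then show "((\<lambda>t. nabla is F ((z(i := z i + t))(j := (z(i := z i + t)) j + h))) has_real_derivative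
      nabla (i # is) F (z(j := z j + h))) (at 0)"
    unfolding shift_coord_commute .
qed

context
  fixes d j :: nat and h :: real and U :: "(nat \<Rightarrow> real) set"
  assumes U: "coord_open d U"
begin

lemma coord_open_shift_domain: "coord_open d {z \<in> U. z(j := z j + h) \<in> U}"
  unfolding coord_open_def
proof (intro ballI allI impI)
  fix z i assume a: "z \<in> {z \<in> U. z(j := z j + h) \<in> U}" "i < d"
  obtain e1 where e1: "e1 > 0" "\<And>t. \<bar>t\<bar> < e1 \<Longrightarrow> z(i := z i + t) \<in> U"
    using U a unfolding coord_open_def by blast
  obtain e2 where e2: "e2 > 0" "\<And>t. \<bar>t\<bar> < e2 \<Longrightarrow> (z(j := z j + h))(i := (z(j := z j + h)) i + t) \<in> U"
    using U a unfolding coord_open_def by blast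
  have "z(i := z i + t) \<in> {z \<in> U. z(j := z j + h) \<in> U}" if t: "\<bar>t\<bar> < min e1 e2" for t
  proof -
    have "(z(i := z i + t))(j := (z(i := z i + t)) j + h) \<in> U"
      by (subst shift_coord_commute) (rule e2(2), use t in simp)
    then show ?thesis using e1 t by simp
  qed
  then show "\<exists>e>0. \<forall>t. \<bar>t\<bar> < e \<longrightarrow> z(i := z i + t) \<in> {z \<in> U. z(j := z j + h) \<in> U}"
    using e1 e2 by (intro exI[of _ "min e1 e2"]) auto
qed

lemma has_partials_fwd_diff:
  assumes "has_partials d U r F"
  shows "has_partials d {z \<in> U. z(j := z j + h) \<in> U} r (fwd_diff j h F)"
  unfolding fwd_diff_def using assms
  by (intro has_partials_diff coord_open_shift_domain has_partials_shift)
    (auto elim: has_partials_mono)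

lemma nabla_fwd_diff:
  assumes "has_partials d U r F" "length is \<le> r" "set is \<subseteq> {..<d}" "z \<in> U" "z(j := z j + h) \<in> U"
  shows "nabla is (fwd_diff j h F) z = nabla is F (z(j := z j + h)) - nabla is F z"
  unfolding fwd_diff_def using assms
  by (subst nabla_diff[OF coord_open_shift_domain has_partials_shift has_partials_mono])
    (auto simp: nabla_shift)

end

lemma nabla_coord_mvt:
  assumes F: "has_partials d U (length (j # js)) F" and js: "set (j # js) \<subseteq> {..<d}" and h: "0 < h"
    and U: "\<And>t. \<xi> j \<le> t \<Longrightarrow> t \<le> \<xi> j + h \<Longrightarrow> \<xi>(j := t) \<in> U"
  obtains z where "\<xi> j < z" "z < \<xi> j + h"
    "nabla js F (\<xi>(j := \<xi> j + h)) - nabla js F \<xi> = h * nabla (j # js) F (\<xi>(j := z))"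
proof -
  have "DERIV (\<lambda>t. nabla js F (\<xi>(j := t))) t :> nabla (j # js) F (\<xi>(j := t))"
    if "\<xi> j \<le> t" "t \<le> \<xi> j + h" for t
  proof -
    have "((\<lambda>s. nabla js F ((\<xi>(j := t))(j := (\<xi>(j := t)) j + s))) has_real_derivative
        nabla (j # js) F (\<xi>(j := t))) (at 0)"
      using js U[OF that] by (intro has_partialsD[OF F]) auto
    from DERIV_along_coord[OF this] show ?thesis by (simp only: fun_upd_upd fun_upd_same)
  qed
  then obtain z where "\<xi> j < z" "z < \<xi> j + h"
    "nabla js F (\<xi>(j := \<xi> j + h)) - nabla js F (\<xi>(j := \<xi> j)) = (\<xi> j + h - \<xi> j) * nabla (j # js) F (\<xi>(j := z))"
    using MVT2[of "\<xi> j" "\<xi> j + h" "\<lambda>t. nabla js F (\<xi>(j := t))" "\<lambda>t. nabla (j # js) F (\<xi>(j := t))"] h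
    by auto
  then show thesis using that by simp
qed

definition fwd_diff_box :: "real \<Rightarrow> (nat \<Rightarrow> real) \<Rightarrow> nat list \<Rightarrow> (nat \<Rightarrow> real) set" where
  "fwd_diff_box h y js = {z. \<forall>i. y i \<le> z i \<and> z i \<le> y i + h * real (count_list js i)}"

lemma fwd_diff_box_upd:
  "0 \<le> h \<Longrightarrow> z \<in> fwd_diff_box h y js \<Longrightarrow> z j \<le> t \<Longrightarrow> t \<le> z j + h \<Longrightarrow>
   z(j := t) \<in> fwd_diff_box h y (j # js)"
  unfolding fwd_diff_box_def by (auto simp: algebra_simps intro: order_trans)

lemma iter_fwd_diff_mvt:
  "coord_open d U \<Longrightarrow> has_partials d U (length js) F \<Longrightarrow> set js \<subseteq> {..<d} \<Longrightarrow> h > 0 \<Longrightarrow>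
   fwd_diff_box h y js \<subseteq> U \<Longrightarrow>
   \<exists>\<xi>\<in>fwd_diff_box h y js. iter_fwd_diff js h F y = h ^ length js * nabla js F \<xi>"
proof (induction js arbitrary: F U)
  case Nil
  have "y \<in> fwd_diff_box h y []" unfolding fwd_diff_box_def by simp
  then show ?case by auto
next
  case (Cons j js)
  define U' where "U' = {z \<in> U. z(j := z j + h) \<in> U}"
  have j: "j < d" using Cons.prems by simp
  have D: "has_partials d U (length js) F" using Cons.prems(2) by (rule has_partials_mono) auto
  note box_step = fwd_diff_box_upd[OF less_imp_le[OF Cons.prems(4)]]
  have sub: "fwd_diff_box h y js \<subseteq> U'"
  proof
    fix z assume "z \<in> fwd_diff_box h y js"
    then have "z \<in> fwd_diff_box h y (j # js)" "z(j := z j + h) \<in> fwd_diff_box h y (j # js)"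
      using box_step[where z = z and j = j and t = "z j"] box_step[where z = z and j = j and t = "z j + h"] Cons.prems(4) by auto
    then show "z \<in> U'" using Cons.prems(5) unfolding U'_def by auto
  qed
  have U': "coord_open d U'" "has_partials d U' (length js) (fwd_diff j h F)"
    unfolding U'_def using coord_open_shift_domain has_partials_fwd_diff Cons.prems(1) D by auto
  obtain \<xi> where \<xi>: "\<xi> \<in> fwd_diff_box h y js"
    "iter_fwd_diff js h (fwd_diff j h F) y = h ^ length js * nabla js (fwd_diff j h F) \<xi>"
    using Cons.IH[OF U'] Cons.prems sub by auto
  have nd: "nabla js (fwd_diff j h F) \<xi> = nabla js F (\<xi>(j := \<xi> j + h)) - nabla js F \<xi>"
    using nabla_fwd_diff[OF Cons.prems(1) D] \<xi> sub Cons.prems unfolding U'_def by auto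
  have "\<xi>(j := t) \<in> U" if "\<xi> j \<le> t" "t \<le> \<xi> j + h" for t
    using box_step[OF \<xi>(1) that] Cons.prems(5) by blast
  then obtain z where z: "\<xi> j < z" "z < \<xi> j + h"
    "nabla js F (\<xi>(j := \<xi> j + h)) - nabla js F \<xi> = h * nabla (j # js) F (\<xi>(j := z))"
    using nabla_coord_mvt[OF Cons.prems(2,3,4)] by blast
  have "\<xi>(j := z) \<in> fwd_diff_box h y (j # js)" using box_step \<xi>(1) z by auto
  moreover have "iter_fwd_diff (j # js) h F y = h ^ length (j # js) * nabla (j # js) F (\<xi>(j := z))"
    using \<xi> nd z by simp
  ultimately show ?case by blast
qed

section \<open>Estimates on the open cube\<close>

lemma open_cube_coord: "x \<in> open_cube d \<Longrightarrow> i < d \<Longrightarrow> 0 < x i \<and> x i < 1"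
  unfolding open_cube_def by auto

lemma open_cube_outside: "x \<in> open_cube d \<Longrightarrow> d \<le> i \<Longrightarrow> x i = 0"
  unfolding open_cube_def by auto

lemma coord_open_open_cube: "coord_open d (open_cube d)"
  unfolding coord_open_def
proof (intro ballI allI impI)
  fix z i assume z: "z \<in> open_cube d" and i: "i < d"
  have "z(i := z i + t) \<in> open_cube d" if "\<bar>t\<bar> < min (z i) (1 - z i)" for t
    using z that i unfolding open_cube_def by auto
  then show "\<exists>e>0. \<forall>t. \<bar>t\<bar> < e \<longrightarrow> z(i := z i + t) \<in> open_cube d"
    using open_cube_coord[OF z i] by (intro exI[of _ "min (z i) (1 - z i)"]) auto
qed

lemma open_cube_segment:
  assumes "x \<in> open_cube d" "y \<in> open_cube d" "0 \<le> s" "s \<le> 1"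
  shows "(\<lambda>i. x i + s * (y i - x i)) \<in> open_cube d"
proof -
  have "0 < x i + s * (y i - x i) \<and> x i + s * (y i - x i) < 1" if "i < d" for i
  proof -
    have e: "x i + s * (y i - x i) = (1 - s) * x i + s * y i" by (simp add: algebra_simps)
    have "(1 - s) * (- x i) + s * (- y i) < 0" "(1 - s) * x i + s * y i < 1"
      using open_cube_coord[OF assms(1) that] open_cube_coord[OF assms(2) that] assms(3,4)
      by (intro convex_bound_lt; simp)+
    then show ?thesis unfolding e by simp
  qed
  then show ?thesis using assms(1,2) unfolding open_cube_def by auto
qed

lemma edist_nonneg: "0 \<le> edist d x y"
  unfolding edist_def by (simp add: sum_nonneg)

lemma abs_coord_le_edist: "l < d \<Longrightarrow> \<bar>x l - y l\<bar> \<le> edist d x y"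
  unfolding edist_def by (rule real_le_rsqrt) (auto intro: member_le_sum)

lemma edist_le_sum_abs: "edist d x y \<le> (\<Sum>i<d. \<bar>x i - y i\<bar>)"
  using L2_set_le_sum_abs[of "\<lambda>i. x i - y i" "{..<d}"] unfolding edist_def L2_set_def .

lemma edist_pos: "x \<in> open_cube d \<Longrightarrow> y \<in> open_cube d \<Longrightarrow> x \<noteq> y \<Longrightarrow> 0 < edist d x y"
proof -
  assume a: "x \<in> open_cube d" "y \<in> open_cube d" "x \<noteq> y"
  then obtain l where l: "x l \<noteq> y l" by auto
  then have "l < d" using a open_cube_outside[of x d l] open_cube_outside[of y d l] by force
  then show ?thesis using abs_coord_le_edist[of l d x y] l by simp
qed

lemma edist_segment:
  "edist d (\<lambda>i. x i + s * (y i - x i)) (\<lambda>i. x i + t * (y i - x i)) = \<bar>s - t\<bar> * edist d x y"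
proof -
  have "(x i + s * (y i - x i) - (x i + t * (y i - x i)))\<^sup>2 = (s - t)\<^sup>2 * (x i - y i)\<^sup>2" for i
    by (simp add: power2_eq_square algebra_simps)
  then have "(\<Sum>i<d. (x i + s * (y i - x i) - (x i + t * (y i - x i)))\<^sup>2) = (s - t)\<^sup>2 * (\<Sum>i<d. (x i - y i)\<^sup>2)"
    by (simp add: sum_distrib_left)
  then show ?thesis unfolding edist_def by (simp add: real_sqrt_mult)
qed

lemma edist_open_cube_le: "x \<in> open_cube d \<Longrightarrow> y \<in> open_cube d \<Longrightarrow> edist d x y \<le> sqrt (real d)"
proof -
  assume "x \<in> open_cube d" "y \<in> open_cube d"
  then have "(x i - y i)\<^sup>2 \<le> 1" if "i < d" for i
    using open_cube_coord[of x d i] open_cube_coord[of y d i] that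
    by (intro abs_square_le_1[THEN iffD2]) auto
  then have "(\<Sum>i<d. (x i - y i)\<^sup>2) \<le> (\<Sum>i<d. 1)" by (intro sum_mono) auto
  then show ?thesis unfolding edist_def by simp
qed

text \<open>A uniformly continuous function changes by less than one along each of the \<open>N\<close> pieces of
  a segment from the centre, so it is bounded by its value at the centre plus \<open>N\<close>.\<close>

lemma ucont_on_open_cube_bounded:
  assumes "ucont_on d (open_cube d) g"
  shows "\<exists>M. \<forall>x\<in>open_cube d. \<bar>g x\<bar> \<le> M"
proof -
  obtain \<delta> where \<delta>: "\<delta> > 0"
    "\<And>x y. x \<in> open_cube d \<Longrightarrow> y \<in> open_cube d \<Longrightarrow> edist d x y < \<delta> \<Longrightarrow> \<bar>g x - g y\<bar> < 1"
    using assms unfolding ucont_on_def by (meson zero_less_one)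
  define c where "c = (\<lambda>i. if i < d then 1 / 2 else (0::real))"
  have c: "c \<in> open_cube d" unfolding c_def open_cube_def by auto
  obtain N :: nat where N: "sqrt (real d) / \<delta> < real N" using reals_Archimedean2 by blast
  moreover have "0 \<le> sqrt (real d) / \<delta>" using \<delta>(1) by simp
  ultimately have N0: "N > 0" by simp
  have "\<bar>g x - g c\<bar> \<le> real N" if x: "x \<in> open_cube d" for x
  proof -
    define p where "p j = (\<lambda>i. c i + (real j / real N) * (x i - c i))" for j
    have p: "p j \<in> open_cube d" if "j \<le> N" for j
      unfolding p_def using that N0 by (intro open_cube_segment[OF c x]) auto
    have "edist d (p (Suc j)) (p j) = edist d c x / real N" for j
      unfolding p_def edist_segment using N0 by (simp add: diff_divide_distrib[symmetric])
    also have "\<dots> < \<delta>" for j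
      using edist_open_cube_le[OF c x] N N0 \<delta>(1) by (simp add: divide_less_eq mult.commute)
    finally have step: "edist d (p (Suc j)) (p j) < \<delta>" for j .
    have "\<bar>g (p j) - g c\<bar> \<le> real j" if "j \<le> N" for j
      using that
    proof (induction j)
      case 0
      then show ?case unfolding p_def by simp
    next
      case (Suc j)
      then show ?case using \<delta>(2)[OF p p step[of j]] by fastforce
    qed
    moreover have "p N = x" unfolding p_def using N0 by (auto simp: fun_eq_iff)
    ultimately show ?thesis by fastforce
  qed
  then show ?thesis by (intro exI[of _ "\<bar>g c\<bar> + real N"]) force
qed

lemma abs_diff_le_deriv_bound:
  fixes \<phi> :: "real \<Rightarrow> real"
  assumes "\<And>t. min a b \<le> t \<Longrightarrow> t \<le> max a b \<Longrightarrow> DERIV \<phi> t :> \<phi>' t"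
    "\<And>t. min a b \<le> t \<Longrightarrow> t \<le> max a b \<Longrightarrow> \<bar>\<phi>' t\<bar> \<le> S"
  shows "\<bar>\<phi> b - \<phi> a\<bar> \<le> S * \<bar>b - a\<bar>"
proof -
  have *: "\<bar>\<phi> v - \<phi> u\<bar> \<le> S * \<bar>v - u\<bar>" if uv: "u < v" "{u, v} = {a, b}" for u v
  proof -
    obtain z where z: "u < z" "z < v" "\<phi> v - \<phi> u = (v - u) * \<phi>' z"
      using MVT2[OF uv(1), of \<phi> \<phi>'] assms uv by (auto simp: doubleton_eq_iff)
    then have "\<bar>\<phi>' z\<bar> \<le> S" using assms(2)[of z] uv by (auto simp: doubleton_eq_iff)
    then show ?thesis using z by (simp add: abs_mult mult.commute mult_left_mono)
  qed
  consider "a < b" | "a = b" | "b < a" by linarith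
  then show ?thesis
    by cases (use *[of a b] *[of b a] in \<open>auto simp: abs_minus_commute insert_commute\<close>)
qed

text \<open>Mean value estimate along the path from \<open>x\<close> to \<open>y\<close> that changes one coordinate at a
  time.\<close>

lemma lipschitz_open_cube:
  assumes der: "\<And>z i. z \<in> open_cube d \<Longrightarrow> i < d \<Longrightarrow>
      ((\<lambda>t. G (z(i := z i + t))) has_real_derivative G' i z) (at 0)"
    and bnd: "\<And>z i. z \<in> open_cube d \<Longrightarrow> i < d \<Longrightarrow> \<bar>G' i z\<bar> \<le> S"
    and x: "x \<in> open_cube d" and y: "y \<in> open_cube d"
  shows "\<bar>G x - G y\<bar> \<le> real d * S * edist d x y"
proof -
  define p where "p l = (\<lambda>i. if i < l then y i else x i)" for l
  have p: "p l \<in> open_cube d" for l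
    using x y unfolding p_def open_cube_def by auto
  have "p d = y" unfolding p_def using open_cube_outside[OF x] open_cube_outside[OF y] by (auto simp: fun_eq_iff)
  moreover have "p 0 = x" unfolding p_def by auto
  ultimately have "G y - G x = (\<Sum>l<d. G (p (Suc l)) - G (p l))"
    using sum_lessThan_telescope[of "\<lambda>l. G (p l)" d] by simp
  then have "\<bar>G x - G y\<bar> \<le> (\<Sum>l<d. \<bar>G (p (Suc l)) - G (p l)\<bar>)"
    by (metis abs_minus_commute sum_abs)
  also have "\<dots> \<le> (\<Sum>l<d. S * edist d x y)"
  proof (rule sum_mono)
    fix l assume "l \<in> {..<d}"
    then have l: "l < d" by simp
    have in_cube: "(p l)(l := t) \<in> open_cube d" if "min (x l) (y l) \<le> t" "t \<le> max (x l) (y l)" for t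
      using that open_cube_coord[OF x l] open_cube_coord[OF y l] p[of l] l unfolding open_cube_def by auto
    have "\<bar>G ((p l)(l := y l)) - G ((p l)(l := x l))\<bar> \<le> S * \<bar>y l - x l\<bar>"
    proof (rule abs_diff_le_deriv_bound[where \<phi>="\<lambda>t. G ((p l)(l := t))" and \<phi>'="\<lambda>t. G' l ((p l)(l := t))"])
      fix t assume t: "min (x l) (y l) \<le> t" "t \<le> max (x l) (y l)"
      show "DERIV (\<lambda>t. G ((p l)(l := t))) t :> G' l ((p l)(l := t))"
        using DERIV_along_coord[OF der[OF in_cube[OF t] l]] by (simp only: fun_upd_upd fun_upd_same)
      show "\<bar>G' l ((p l)(l := t))\<bar> \<le> S" using bnd[OF in_cube[OF t] l] .
    qed
    moreover have "(p l)(l := y l) = p (Suc l)" "(p l)(l := x l) = p l" unfolding p_def by (auto simp: fun_eq_iff)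
    moreover have "S * \<bar>y l - x l\<bar> \<le> S * edist d x y"
      using bnd[OF x l] abs_coord_le_edist[OF l, of x y]
      by (intro mult_left_mono) (auto simp: abs_minus_commute)
    ultimately show "\<bar>G (p (Suc l)) - G (p l)\<bar> \<le> S * edist d x y" by simp
  qed
  finally show ?thesis by simp
qed

lemma ucont_on_lipschitz:
  assumes "\<And>x y. x \<in> U \<Longrightarrow> y \<in> U \<Longrightarrow> \<bar>g x - g y\<bar> \<le> L * edist d x y" "L \<ge> 0"
  shows "ucont_on d U g"
  unfolding ucont_on_def
proof (intro allI impI)
  fix e :: real assume e: "e > 0"
  have "\<bar>g x - g y\<bar> < e" if "x \<in> U" "y \<in> U" "edist d x y < e / (L + 1)" for x y
  proof -
    have "\<bar>g x - g y\<bar> \<le> (L + 1) * edist d x y"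
      using assms that edist_nonneg[of d x y] by (smt (verit) mult_right_mono)
    also have "\<dots> < e" using that(3) assms(2) by (simp add: pos_less_divide_eq mult.commute)
    finally show ?thesis .
  qed
  then show "\<exists>\<delta>>0. \<forall>x\<in>U. \<forall>y\<in>U. edist d x y < \<delta> \<longrightarrow> \<bar>g x - g y\<bar> < e"
    using e assms(2) by (intro exI[of _ "e / (L + 1)"]) auto
qed

section \<open>Bernstein approximation of derivatives\<close>

lemma Bernstein_le_1: "0 \<le> t \<Longrightarrow> t \<le> 1 \<Longrightarrow> r \<le> m \<Longrightarrow> Bernstein m r t \<le> 1"
  using member_le_sum[of r "{..m}" "\<lambda>k. Bernstein m k t"] by (auto intro: Bernstein_nonneg)

lemma bernstein_weight_bounds:
  assumes "x \<in> open_cube d" "k \<in> (\<Pi>\<^sub>E i\<in>{..<d}. {..m i})"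
  shows "0 \<le> (\<Prod>i<d. Bernstein (m i) (k i) (x i))" "(\<Prod>i<d. Bernstein (m i) (k i) (x i)) \<le> 1"
proof -
  have c: "0 \<le> x i" "x i \<le> 1" "k i \<le> m i" if "i < d" for i
    using assms that open_cube_coord[OF assms(1) that] by auto
  then show "0 \<le> (\<Prod>i<d. Bernstein (m i) (k i) (x i))" by (intro prod_nonneg Bernstein_nonneg) auto
  show "(\<Prod>i<d. Bernstein (m i) (k i) (x i)) \<le> 1"
    using c by (intro prod_le_1) (auto intro: Bernstein_nonneg Bernstein_le_1)
qed

lemma sum_bernstein_weights:
  "(\<Sum>k\<in>(\<Pi>\<^sub>E i\<in>{..<d::nat}. {..m i}). \<Prod>i<d. Bernstein (m i) (k i) (x i)) = 1"
  by (subst prod_sum_PiE[of "{..<d}" "\<lambda>i. {..m i}" "\<lambda>i r. Bernstein (m i) r (x i)", symmetric])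
    (simp_all add: sum_Bernstein)

lemma abs_bernstein_poly_le:
  "x \<in> open_cube d \<Longrightarrow> \<bar>bernstein_poly d (m, a) x\<bar> \<le> (\<Sum>k\<in>(\<Pi>\<^sub>E i\<in>{..<d}. {..m i}). \<bar>a k\<bar>)"
  unfolding bernstein_poly_def fst_conv snd_conv
  by (rule order_trans[OF sum_abs sum_mono])
    (use bernstein_weight_bounds in \<open>auto simp: abs_mult intro!: mult_left_le\<close>)

lemma sum_Bernstein_sq_dev:
  assumes "0 < M"
  shows "(\<Sum>k\<le>M. (x - real k / real M)\<^sup>2 * Bernstein M k x) = x * (1 - x) / real M"
proof -
  have *: "\<And>a b x::real. (a - b)\<^sup>2 * x = a * (a - 1) * x + (1 - 2 * b) * a * x + b * b * x"
    by (simp add: algebra_simps power2_eq_square)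
  have "(\<Sum>k\<le>M. (real k - real M * x)\<^sup>2 * Bernstein M k x) = real M * x * (1 - x)"
    by (simp add: * sum.distrib, simp flip: sum_distrib_left add: mult.assoc,
        simp add: algebra_simps power2_eq_square)
  then have "(\<Sum>k\<le>M. (real k - real M * x)\<^sup>2 * Bernstein M k x) / real M ^ 2 = x * (1 - x) / real M"
    by (simp add: power2_eq_square)
  then show ?thesis
    using assms by (simp add: sum_divide_distrib field_split_simps power2_commute)
qed

lemma sum_Bernstein_far_le:
  assumes "0 \<le> t" "t \<le> 1" "0 < M" "0 < \<eta>"
  shows "(\<Sum>r\<in>{r. r \<le> M \<and> \<eta> \<le> \<bar>real r / real M - t\<bar>}. Bernstein M r t) \<le> 1 / (real M * \<eta>\<^sup>2)"
proof -
  have "(\<Sum>r\<in>{r. r \<le> M \<and> \<eta> \<le> \<bar>real r / real M - t\<bar>}. Bernstein M r t)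
     \<le> (\<Sum>r\<in>{r. r \<le> M \<and> \<eta> \<le> \<bar>real r / real M - t\<bar>}. (t - real r / real M)\<^sup>2 / \<eta>\<^sup>2 * Bernstein M r t)"
  proof (rule sum_mono)
    fix r assume "r \<in> {r. r \<le> M \<and> \<eta> \<le> \<bar>real r / real M - t\<bar>}"
    then have "\<eta>\<^sup>2 \<le> (t - real r / real M)\<^sup>2"
      using assms(4) abs_le_square_iff[of \<eta> "t - real r / real M"] by (simp add: abs_minus_commute)
    then have "1 \<le> (t - real r / real M)\<^sup>2 / \<eta>\<^sup>2" using assms(4) by simp
    from mult_right_mono[OF this Bernstein_nonneg[OF assms(1,2)]]
    show "Bernstein M r t \<le> (t - real r / real M)\<^sup>2 / \<eta>\<^sup>2 * Bernstein M r t" by simp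
  qed
  also have "\<dots> \<le> (\<Sum>r\<le>M. (t - real r / real M)\<^sup>2 / \<eta>\<^sup>2 * Bernstein M r t)"
    by (rule sum_mono2) (auto intro!: divide_nonneg_nonneg mult_nonneg_nonneg Bernstein_nonneg assms)
  also have "\<dots> = t * (1 - t) / real M / \<eta>\<^sup>2"
    using sum_Bernstein_sq_dev[OF assms(3), of t] by (simp add: sum_divide_distrib[symmetric] field_simps)
  also have "\<dots> \<le> 1 / real M / \<eta>\<^sup>2"
    using assms by (intro divide_right_mono) (auto simp: mult_le_one)
  finally show ?thesis by simp
qed

lemma PiE_filter_coord:
  assumes "i \<in> I"
  shows "{k \<in> Pi\<^sub>E I T. P (k i)} = Pi\<^sub>E I (T(i := {r \<in> T i. P r}))"
  using assms unfolding PiE_def Pi_def extensional_def by auto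

lemma sum_bernstein_weights_far_coord_le:
  assumes x: "x \<in> open_cube d" and i: "i < d" and m: "m i > 0" and \<eta>: "\<eta> > 0"
  shows "(\<Sum>k\<in>{k\<in>(\<Pi>\<^sub>E l\<in>{..<d}. {..m l}). \<eta> \<le> \<bar>real (k i) / real (m i) - x i\<bar>}.
           \<Prod>l<d. Bernstein (m l) (k l) (x l)) \<le> 1 / (real (m i) * \<eta>\<^sup>2)"
proof -
  define S where "S = (\<lambda>l. {..m l})(i := {r \<in> {..m i}. \<eta> \<le> \<bar>real r / real (m i) - x i\<bar>})"
  have eq: "{k\<in>(\<Pi>\<^sub>E l\<in>{..<d}. {..m l}). \<eta> \<le> \<bar>real (k i) / real (m i) - x i\<bar>} = Pi\<^sub>E {..<d} S"
    unfolding S_def using i by (intro PiE_filter_coord) simp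
  have "(\<Sum>k\<in>Pi\<^sub>E {..<d} S. \<Prod>l<d. Bernstein (m l) (k l) (x l))
      = (\<Prod>l<d. \<Sum>r\<in>S l. Bernstein (m l) r (x l))"
    by (rule prod_sum_PiE[of "{..<d}" S "\<lambda>l r. Bernstein (m l) r (x l)", symmetric]) (auto simp: S_def)
  also have "\<dots> = (\<Sum>r\<in>S i. Bernstein (m i) r (x i)) * (\<Prod>l\<in>{..<d} - {i}. \<Sum>r\<in>S l. Bernstein (m l) r (x l))"
    using i by (subst prod.remove[of _ i]) auto
  also have "(\<Prod>l\<in>{..<d} - {i}. \<Sum>r\<in>S l. Bernstein (m l) r (x l)) = 1"
    unfolding S_def by (intro prod.neutral) (auto simp: sum_Bernstein)
  also have "(\<Sum>r\<in>S i. Bernstein (m i) r (x i)) \<le> 1 / (real (m i) * \<eta>\<^sup>2)"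
    unfolding S_def using open_cube_coord[OF x i] m \<eta> by (simp add: sum_Bernstein_far_le)
  finally show ?thesis unfolding eq by simp
qed

lemma sum_filter_ex_le:
  fixes W :: "'k \<Rightarrow> real" and d :: nat
  assumes "finite A" "\<And>k. k \<in> A \<Longrightarrow> 0 \<le> W k"
  shows "sum W {k\<in>A. \<exists>i<d. Q i k} \<le> (\<Sum>i<d. sum W {k\<in>A. Q i k})"
proof -
  have "sum W {k\<in>A. \<exists>i<d. Q i k} = (\<Sum>k\<in>A. if \<exists>i<d. Q i k then W k else 0)"
    using assms(1) by (simp add: sum.inter_filter)
  also have "\<dots> \<le> (\<Sum>k\<in>A. \<Sum>i<d. if Q i k then W k else 0)"
  proof (rule sum_mono)
    fix k assume k: "k \<in> A"
    show "(if \<exists>i<d. Q i k then W k else 0) \<le> (\<Sum>i<d. if Q i k then W k else 0)"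
    proof (cases "\<exists>i<d. Q i k")
      case True
      then obtain i where "i < d" "Q i k" by blast
      then show ?thesis
        using member_le_sum[of i "{..<d}" "\<lambda>i. if Q i k then W k else 0"] assms(2)[OF k] by auto
    qed (use assms(2)[OF k] in \<open>auto intro: sum_nonneg\<close>)
  qed
  also have "\<dots> = (\<Sum>i<d. sum W {k\<in>A. Q i k})"
    using assms(1) by (subst sum.swap) (simp add: sum.inter_filter)
  finally show ?thesis .
qed

lemma abs_weighted_sum_sub_le:
  fixes W :: "'k \<Rightarrow> real"
  assumes A: "finite A" and W0: "\<And>k. k \<in> A \<Longrightarrow> W k \<ge> 0" and W1: "(\<Sum>k\<in>A. W k) = 1"
    and M: "\<And>k. k \<in> A \<Longrightarrow> \<bar>v k\<bar> \<le> M" "\<bar>g0\<bar> \<le> M"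
    and near: "\<And>k. k \<in> A \<Longrightarrow> \<not> P k \<Longrightarrow> \<bar>v k - g0\<bar> \<le> e" and e: "e \<ge> 0"
  shows "\<bar>(\<Sum>k\<in>A. C * v k * W k) - g0\<bar> \<le> \<bar>C - 1\<bar> * M + e + 2 * M * sum W {k\<in>A. P k}"
proof -
  have "(\<Sum>k\<in>A. C * v k * W k) - g0 = (\<Sum>k\<in>A. ((C - 1) * v k + (v k - g0)) * W k)"
    using W1 by (simp add: algebra_simps sum_subtractf sum.distrib flip: sum_distrib_left sum_distrib_right)
  also have "\<bar>\<dots>\<bar> \<le> (\<Sum>k\<in>A. \<bar>C - 1\<bar> * M * W k + (e * W k + (if P k then 2 * M * W k else 0)))"
  proof (rule order_trans[OF sum_abs sum_mono])
    fix k assume k: "k \<in> A"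
    have "\<bar>(C - 1) * v k\<bar> \<le> \<bar>C - 1\<bar> * M" using M(1)[OF k] by (simp add: abs_mult mult_left_mono)
    moreover have "\<bar>v k - g0\<bar> \<le> e + (if P k then 2 * M else 0)"
      using near[OF k] M(1)[OF k] M(2) e by auto
    ultimately have "\<bar>(C - 1) * v k + (v k - g0)\<bar> * W k
        \<le> (\<bar>C - 1\<bar> * M + (e + (if P k then 2 * M else 0))) * W k"
      using W0[OF k] by (intro mult_right_mono) auto
    moreover have "\<bar>((C - 1) * v k + (v k - g0)) * W k\<bar> = \<bar>(C - 1) * v k + (v k - g0)\<bar> * W k"
      using W0[OF k] by (simp only: abs_mult abs_of_nonneg)
    ultimately show "\<bar>((C - 1) * v k + (v k - g0)) * W k\<bar>
        \<le> \<bar>C - 1\<bar> * M * W k + (e * W k + (if P k then 2 * M * W k else 0))"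
      by (simp add: distrib_right split: if_splits)
  qed
  also have "\<dots> = \<bar>C - 1\<bar> * M + e + 2 * M * sum W {k\<in>A. P k}"
    using W1 A by (simp add: sum.distrib sum.inter_filter[symmetric] flip: sum_distrib_left)
  finally show ?thesis .
qed

lemma abs_bernstein_node_sub_le:
  fixes k c n :: nat
  assumes "c \<le> 3" "4 \<le> n" "k \<le> n - c"
  shows "\<bar>real (k + 1) / real (n + 2) - real k / real (n - c)\<bar> \<le> 4 / real (n + 2)"
proof -
  define M where "M = real n - real c"
  have M: "real (n - c) = M" "M \<ge> 1" "real k \<le> M" unfolding M_def using assms by auto
  have "real k * (real c + 2) \<le> M * 5" using M assms by (intro mult_mono) auto
  moreover have "0 \<le> real k * (real c + 2)" by simp
  ultimately have "\<bar>M - real k * (real c + 2)\<bar> \<le> 4 * M" using M(2) by linarith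
  then have "\<bar>M - real k * (real c + 2)\<bar> / ((real n + 2) * M) \<le> 4 * M / ((real n + 2) * M)"
    using M(2) by (intro divide_right_mono) auto
  moreover have "real (k + 1) / real (n + 2) - real k / M = (M - real k * (real c + 2)) / ((real n + 2) * M)"
    using M(2) unfolding M_def by (simp add: field_simps)
  ultimately show ?thesis using M by (simp add: abs_div add.commute)
qed

lemma degree_factor_bounds:
  "length xs \<le> n \<Longrightarrow>
   real (n - length xs) ^ length xs \<le> degree_factor xs (\<lambda>_. n) \<and> degree_factor xs (\<lambda>_. n) \<le> real n ^ length xs"
proof (induction xs)
  case (Cons j xs)
  have "n - Suc (length xs) \<le> n - count_list xs j" "n - count_list xs j \<le> n"
    using count_le_length[of xs j] by auto
  moreover have "real (n - Suc (length xs)) ^ length xs \<le> real (n - length xs) ^ length xs"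
    by (intro power_mono) auto
  moreover have "0 \<le> degree_factor xs (\<lambda>_. n)"
  proof -
    have "real (n - length xs) ^ length xs \<le> degree_factor xs (\<lambda>_. n)" using Cons by simp
    then show ?thesis using zero_le_power[of "real (n - length xs)" "length xs"] by linarith
  qed
  ultimately show ?case using Cons by (auto intro!: mult_mono)
qed simp

lemma abs_degree_factor_scaled_sub_le:
  assumes "length xs \<le> 3" "4 \<le> n"
  shows "\<bar>degree_factor xs (\<lambda>_. n) * (1 / real (n + 2)) ^ length xs - 1\<bar> \<le> 15 / real (n + 2)"
proof -
  let ?L = "length xs"
  define C where "C = degree_factor xs (\<lambda>_. n) * (1 / real (n + 2)) ^ ?L"
  have cb: "real (n - ?L) ^ ?L \<le> degree_factor xs (\<lambda>_. n)" "degree_factor xs (\<lambda>_. n) \<le> real n ^ ?L"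
    using degree_factor_bounds[of xs n] assms by auto
  have "C \<le> (real n / real (n + 2)) ^ ?L"
    unfolding C_def power_divide using cb by (simp add: divide_right_mono)
  also have "\<dots> \<le> 1" by (intro power_le_one) auto
  finally have up: "C \<le> 1" .
  define b where "b = 1 - 5 / real (n + 2)"
  have b: "0 \<le> b" "b \<le> 1" "b = (real n - 3) / real (n + 2)" unfolding b_def using assms by (auto simp: field_simps)
  have "1 - 15 / real (n + 2) \<le> b ^ 3"
    using Bernoulli_inequality[of "- 5 / real (n + 2)" 3] assms unfolding b_def by (simp add: field_simps)
  also have "\<dots> \<le> b ^ ?L" using b assms by (intro power_decreasing) auto
  also have "\<dots> \<le> (real (n - ?L) / real (n + 2)) ^ ?L"
    unfolding b(3) using assms by (intro power_mono divide_right_mono) auto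
  also have "\<dots> \<le> C" unfolding C_def power_divide using cb by (simp add: divide_right_mono)
  finally show ?thesis using up unfolding C_def by simp
qed

definition bernstein_approx :: "nat \<Rightarrow> nat \<Rightarrow> ((nat \<Rightarrow> real) \<Rightarrow> real) \<Rightarrow> (nat \<Rightarrow> real) \<Rightarrow> real" where
  "bernstein_approx d n F = bernstein_poly d (\<lambda>_. n, \<lambda>k. F (bernstein_node n d k))"

lemma nabla_bernstein_approx:
  assumes "set js \<subseteq> {..<d}"
  shows "nabla js (bernstein_approx d n F) x =
    (\<Sum>k\<in>(\<Pi>\<^sub>E i\<in>{..<d}. {..n - count_list js i}).
       degree_factor (rev js) (\<lambda>_. n) * iter_fwd_diff js (1 / real (n + 2)) F (bernstein_node n d k)
       * (\<Prod>i<d. Bernstein (n - count_list js i) (k i) (x i)))"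
proof -
  have "snd (nabla_coeffs js (\<lambda>_. n, \<lambda>k. F (bernstein_node n d k))) k
      = degree_factor (rev js) (\<lambda>_. n) * iter_fwd_diff js (1 / real (n + 2)) F (bernstein_node n d k)" for k
    using snd_nabla_coeffs_node[of "rev js" d "\<lambda>_. n" F n k] assms by (simp add: nabla_coeffs_rev)
  then show ?thesis
    unfolding bernstein_approx_def nabla_bernstein_poly[OF assms] bernstein_poly_def fst_nabla_coeffs
    by simp
qed

lemma fwd_diff_box_bernstein_node_subset:
  assumes js: "set js \<subseteq> {..<d}" "length js \<le> 3" and n: "4 \<le> n"
    and k: "k \<in> (\<Pi>\<^sub>E i\<in>{..<d}. {..n - count_list js i})"
  shows "fwd_diff_box (1 / real (n + 2)) (bernstein_node n d k) js \<subseteq> open_cube d"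
proof
  define h where "h = 1 / real (n + 2)"
  fix z assume "z \<in> fwd_diff_box (1 / real (n + 2)) (bernstein_node n d k) js"
  then have z: "bernstein_node n d k i \<le> z i \<and> z i \<le> bernstein_node n d k i + h * real (count_list js i)"
    for i unfolding fwd_diff_box_def h_def by blast
  have "0 < z i \<and> z i < 1" if i: "i < d" for i
  proof -
    have "k i \<le> n - count_list js i" using PiE_mem[OF k, of i] i by simp
    then have "k i + 1 + count_list js i < n + 2" using count_le_length[of js i] js(2) n by linarith
    moreover have "real (k i + 1) / real (n + 2) + h * real (count_list js i)
        = real (k i + 1 + count_list js i) / real (n + 2)"
      unfolding h_def by (simp add: add_divide_distrib)
    ultimately have "real (k i + 1) / real (n + 2) + h * real (count_list js i) < 1" by simp
    moreover have "bernstein_node n d k i = real (k i + 1) / real (n + 2)"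
      using i unfolding bernstein_node_def by simp
    moreover have "0 < real (k i + 1) / real (n + 2)" by simp
    ultimately show ?thesis using z[of i] by linarith
  qed
  moreover have "z i = 0" if "d \<le> i" for i
  proof -
    have "count_list js i = 0" "bernstein_node n d k i = 0"
      using that js(1) unfolding bernstein_node_def by (auto simp: count_list_0_iff)
    then show ?thesis using z[of i] by simp
  qed
  ultimately show "z \<in> open_cube d" unfolding open_cube_def by auto
qed

lemma bernstein_node_mvt:
  assumes F: "has_partials d (open_cube d) (length js) F" and js: "set js \<subseteq> {..<d}" "length js \<le> 3"
    and n: "4 \<le> n" and k: "k \<in> (\<Pi>\<^sub>E i\<in>{..<d}. {..n - count_list js i})"
  obtains \<xi> where "\<xi> \<in> open_cube d"
    "iter_fwd_diff js (1 / real (n + 2)) F (bernstein_node n d k) = (1 / real (n + 2)) ^ length js * nabla js F \<xi>"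
    "\<And>i. i < d \<Longrightarrow> \<bar>\<xi> i - real (k i) / real (n - count_list js i)\<bar> \<le> 7 / real (n + 2)"
proof -
  define h where "h = 1 / real (n + 2)"
  have cnt: "count_list js i \<le> 3" for i using count_le_length[of js i] js(2) by simp
  have h: "h > 0" unfolding h_def by simp
  have box: "fwd_diff_box h (bernstein_node n d k) js \<subseteq> open_cube d"
    unfolding h_def using fwd_diff_box_bernstein_node_subset[OF js n k] .
  then obtain \<xi> where \<xi>: "\<xi> \<in> fwd_diff_box h (bernstein_node n d k) js"
    "iter_fwd_diff js h F (bernstein_node n d k) = h ^ length js * nabla js F \<xi>"
    using iter_fwd_diff_mvt[OF coord_open_open_cube F js(1) h box] by blast
  moreover have "\<bar>\<xi> i - real (k i) / real (n - count_list js i)\<bar> \<le> 7 / real (n + 2)" if i: "i < d" for i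
  proof -
    have "h * real (count_list js i) \<le> 3 / real (n + 2)"
      using cnt[of i] unfolding h_def by (simp add: divide_right_mono)
    moreover have "bernstein_node n d k i \<le> \<xi> i \<and> \<xi> i \<le> bernstein_node n d k i + h * real (count_list js i)"
      using \<xi>(1) unfolding fwd_diff_box_def by blast
    moreover have "\<bar>bernstein_node n d k i - real (k i) / real (n - count_list js i)\<bar> \<le> 4 / real (n + 2)"
      using abs_bernstein_node_sub_le[OF cnt n, of "k i"] k i unfolding bernstein_node_def by auto
    ultimately show ?thesis by (simp add: abs_le_iff)
  qed
  moreover have "\<xi> \<in> open_cube d" using \<xi>(1) box by blast
  ultimately show thesis using that unfolding h_def by blast
qed

lemma sum_bernstein_weights_far_coords_le:
  assumes x: "x \<in> open_cube d" and m: "\<And>i. i < d \<Longrightarrow> 0 < m i" and \<eta>: "0 < \<eta>"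
  shows "(\<Sum>k\<in>{k\<in>(\<Pi>\<^sub>E i\<in>{..<d}. {..m i}). \<exists>i<d. \<eta> \<le> \<bar>real (k i) / real (m i) - x i\<bar>}.
           \<Prod>i<d. Bernstein (m i) (k i) (x i)) \<le> (\<Sum>i<d. 1 / (real (m i) * \<eta>\<^sup>2))"
proof -
  have "(\<Sum>k\<in>{k\<in>(\<Pi>\<^sub>E i\<in>{..<d}. {..m i}). \<exists>i<d. \<eta> \<le> \<bar>real (k i) / real (m i) - x i\<bar>}.
           \<Prod>i<d. Bernstein (m i) (k i) (x i))
      \<le> (\<Sum>i<d. \<Sum>k\<in>{k\<in>(\<Pi>\<^sub>E i\<in>{..<d}. {..m i}). \<eta> \<le> \<bar>real (k i) / real (m i) - x i\<bar>}.
           \<Prod>i<d. Bernstein (m i) (k i) (x i))"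
    using bernstein_weight_bounds(1)[OF x] by (intro sum_filter_ex_le) (auto intro: finite_PiE)
  also have "\<dots> \<le> (\<Sum>i<d. 1 / (real (m i) * \<eta>\<^sup>2))"
    using sum_bernstein_weights_far_coord_le[OF x] m \<eta> by (intro sum_mono) auto
  finally show ?thesis .
qed

lemma nabla_bernstein_approx_eq_average:
  assumes F: "has_partials d (open_cube d) (length js) F" and js: "set js \<subseteq> {..<d}" "length js \<le> 3"
    and n: "4 \<le> n"
  obtains \<xi> where
    "\<And>k. k \<in> (\<Pi>\<^sub>E i\<in>{..<d}. {..n - count_list js i}) \<Longrightarrow> \<xi> k \<in> open_cube d"
    "\<And>k i. k \<in> (\<Pi>\<^sub>E i\<in>{..<d}. {..n - count_list js i}) \<Longrightarrow> i < d \<Longrightarrow>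
       \<bar>\<xi> k i - real (k i) / real (n - count_list js i)\<bar> \<le> 7 / real (n + 2)"
    "nabla js (bernstein_approx d n F) x =
       (\<Sum>k\<in>(\<Pi>\<^sub>E i\<in>{..<d}. {..n - count_list js i}).
          degree_factor (rev js) (\<lambda>_. n) * (1 / real (n + 2)) ^ length js * nabla js F (\<xi> k)
          * (\<Prod>i<d. Bernstein (n - count_list js i) (k i) (x i)))"
proof -
  define A where "A = (\<Pi>\<^sub>E i\<in>{..<d}. {..n - count_list js i})"
  have "\<exists>\<xi>. \<xi> \<in> open_cube d
      \<and> (\<forall>i<d. \<bar>\<xi> i - real (k i) / real (n - count_list js i)\<bar> \<le> 7 / real (n + 2))
      \<and> iter_fwd_diff js (1 / real (n + 2)) F (bernstein_node n d k) = (1 / real (n + 2)) ^ length js * nabla js F \<xi>"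
    if k: "k \<in> A" for k
  proof -
    obtain \<xi> where "\<xi> \<in> open_cube d"
      "iter_fwd_diff js (1 / real (n + 2)) F (bernstein_node n d k) = (1 / real (n + 2)) ^ length js * nabla js F \<xi>"
      "\<And>i. i < d \<Longrightarrow> \<bar>\<xi> i - real (k i) / real (n - count_list js i)\<bar> \<le> 7 / real (n + 2)"
      using bernstein_node_mvt[OF F js n k[unfolded A_def]] by blast
    then show ?thesis by blast
  qed
  then have "\<exists>\<xi>. \<forall>k\<in>A. \<xi> k \<in> open_cube d
      \<and> (\<forall>i<d. \<bar>\<xi> k i - real (k i) / real (n - count_list js i)\<bar> \<le> 7 / real (n + 2))
      \<and> iter_fwd_diff js (1 / real (n + 2)) F (bernstein_node n d k) = (1 / real (n + 2)) ^ length js * nabla js F (\<xi> k)"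
    by (intro bchoice) blast
  then obtain \<xi> where \<xi>: "\<And>k. k \<in> A \<Longrightarrow> \<xi> k \<in> open_cube d"
    "\<And>k i. k \<in> A \<Longrightarrow> i < d \<Longrightarrow> \<bar>\<xi> k i - real (k i) / real (n - count_list js i)\<bar> \<le> 7 / real (n + 2)"
    "\<And>k. k \<in> A \<Longrightarrow> iter_fwd_diff js (1 / real (n + 2)) F (bernstein_node n d k)
       = (1 / real (n + 2)) ^ length js * nabla js F (\<xi> k)"
    by blast
  have "nabla js (bernstein_approx d n F) x =
       (\<Sum>k\<in>A. degree_factor (rev js) (\<lambda>_. n) * (1 / real (n + 2)) ^ length js * nabla js F (\<xi> k)
          * (\<Prod>i<d. Bernstein (n - count_list js i) (k i) (x i)))"
    unfolding nabla_bernstein_approx[OF js(1)] A_def[symmetric]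
    by (intro sum.cong refl) (simp only: \<xi>(3) mult_ac)
  from that[OF \<xi>(1)[unfolded A_def] \<xi>(2)[unfolded A_def] this[unfolded A_def]] show thesis .
qed

text \<open>If \<open>\<xi> k\<close> is far from \<open>x\<close>, then so is one coordinate of the node \<open>k / m\<close>, and Chebyshev's
  inequality bounds the weight of such nodes.\<close>

lemma sum_bernstein_weights_far_points_le:
  assumes js: "length js \<le> 3" and d: "0 < d" and n: "4 \<le> n" and x: "x \<in> open_cube d"
    and \<xi>: "\<And>k i. k \<in> (\<Pi>\<^sub>E i\<in>{..<d}. {..n - count_list js i}) \<Longrightarrow> i < d \<Longrightarrow>
       \<bar>\<xi> k i - real (k i) / real (n - count_list js i)\<bar> \<le> 7 / real (n + 2)"
    and \<eta>: "0 < \<eta>" "real d * (\<eta> + 7 / real (n + 2)) \<le> \<delta>"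
  shows "(\<Sum>k\<in>{k\<in>(\<Pi>\<^sub>E i\<in>{..<d}. {..n - count_list js i}). \<delta> \<le> edist d (\<xi> k) x}.
      \<Prod>i<d. Bernstein (n - count_list js i) (k i) (x i)) \<le> real d / \<eta>\<^sup>2 / (real n - 3)"
proof -
  define m where "m i = n - count_list js i" for i
  define A where "A = (\<Pi>\<^sub>E i\<in>{..<d}. {..m i})"
  define W where "W k = (\<Prod>i<d. Bernstein (m i) (k i) (x i))" for k
  have cnt: "count_list js i \<le> 3" for i using count_le_length[of js i] js by simp
  have cnt_n: "count_list js i < n" for i using n cnt[of i] by linarith
  have far: "\<exists>i<d. \<eta> \<le> \<bar>real (k i) / real (m i) - x i\<bar>" if k: "k \<in> A" "\<delta> \<le> edist d (\<xi> k) x" for k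
  proof (rule ccontr)
    assume "\<not> ?thesis"
    then have close: "\<bar>real (k i) / real (m i) - x i\<bar> < \<eta>" if "i < d" for i
      using that by (auto simp: not_le)
    have "\<bar>\<xi> k i - x i\<bar> < \<eta> + 7 / real (n + 2)" if "i < d" for i
      using close[OF that] \<xi>[OF k(1)[unfolded A_def m_def] that] unfolding m_def
      by (auto simp: abs_less_iff abs_le_iff)
    then have "(\<Sum>i<d. \<bar>\<xi> k i - x i\<bar>) < (\<Sum>i<d. \<eta> + 7 / real (n + 2))"
      using d by (intro sum_strict_mono) auto
    then show False using edist_le_sum_abs[of d "\<xi> k" x] k(2) \<eta>(2) by simp
  qed
  have "finite A" unfolding A_def by (intro finite_PiE) auto
  then have "sum W {k\<in>A. \<delta> \<le> edist d (\<xi> k) x} \<le> sum W {k\<in>A. \<exists>i<d. \<eta> \<le> \<bar>real (k i) / real (m i) - x i\<bar>}"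
    using far bernstein_weight_bounds(1)[OF x] unfolding A_def W_def by (intro sum_mono2) auto
  also have "\<dots> \<le> (\<Sum>i<d. 1 / (real (m i) * \<eta>\<^sup>2))"
    unfolding A_def W_def using cnt_n \<eta>(1)
    by (intro sum_bernstein_weights_far_coords_le[OF x]) (auto simp: m_def)
  also have "\<dots> \<le> (\<Sum>i<d. 1 / ((real n - 3) * \<eta>\<^sup>2))"
  proof (rule sum_mono)
    fix i
    have "real n - 3 \<le> real (m i)" using cnt[of i] cnt_n[of i] unfolding m_def by simp
    then show "1 / (real (m i) * \<eta>\<^sup>2) \<le> 1 / ((real n - 3) * \<eta>\<^sup>2)"
      using n \<eta>(1) by (intro divide_left_mono mult_right_mono mult_pos_pos) auto
  qed
  finally show ?thesis unfolding A_def W_def m_def by (simp add: mult.commute)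
qed

text \<open>The derivative of the Bernstein approximation is an average of values of the derivative of
  \<open>F\<close> at points \<open>\<xi> k\<close> near the nodes: it is close to the derivative at \<open>x\<close> on the nodes near
  \<open>x\<close>, and the far nodes carry little weight.\<close>

lemma abs_nabla_bernstein_approx_sub_le:
  assumes F: "has_partials d (open_cube d) (length js) F" and js: "set js \<subseteq> {..<d}" "length js \<le> 3"
    and d: "0 < d" and n: "4 \<le> n" and x: "x \<in> open_cube d"
    and M: "\<And>y. y \<in> open_cube d \<Longrightarrow> \<bar>nabla js F y\<bar> \<le> M"
    and near: "\<And>y. y \<in> open_cube d \<Longrightarrow> edist d y x < \<delta> \<Longrightarrow> \<bar>nabla js F y - nabla js F x\<bar> \<le> e"
    and e: "0 \<le> e" and \<eta>: "0 < \<eta>" "real d * (\<eta> + 7 / real (n + 2)) \<le> \<delta>"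
  shows "\<bar>nabla js (bernstein_approx d n F) x - nabla js F x\<bar>
    \<le> 15 / real (n + 2) * M + e + 2 * M * (real d / \<eta>\<^sup>2 / (real n - 3))"
proof -
  obtain \<xi> where
    \<xi>1: "\<And>k. k \<in> (\<Pi>\<^sub>E i\<in>{..<d}. {..n - count_list js i}) \<Longrightarrow> \<xi> k \<in> open_cube d" and
    \<xi>2: "\<And>k i. k \<in> (\<Pi>\<^sub>E i\<in>{..<d}. {..n - count_list js i}) \<Longrightarrow> i < d \<Longrightarrow>
       \<bar>\<xi> k i - real (k i) / real (n - count_list js i)\<bar> \<le> 7 / real (n + 2)" and
    \<xi>3: "nabla js (bernstein_approx d n F) x =
       (\<Sum>k\<in>(\<Pi>\<^sub>E i\<in>{..<d}. {..n - count_list js i}).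
          degree_factor (rev js) (\<lambda>_. n) * (1 / real (n + 2)) ^ length js * nabla js F (\<xi> k)
          * (\<Prod>i<d. Bernstein (n - count_list js i) (k i) (x i)))"
    using nabla_bernstein_approx_eq_average[OF F js n, where x = x] by blast
  define A where "A = (\<Pi>\<^sub>E i\<in>{..<d}. {..n - count_list js i})"
  define W where "W k = (\<Prod>i<d. Bernstein (n - count_list js i) (k i) (x i))" for k
  define C where "C = degree_factor (rev js) (\<lambda>_. n) * (1 / real (n + 2)) ^ length js"
  note \<xi> = \<xi>1[folded A_def] \<xi>2[folded A_def] \<xi>3[folded A_def C_def W_def]
  have A: "finite A" "\<And>k. k \<in> A \<Longrightarrow> 0 \<le> W k" "(\<Sum>k\<in>A. W k) = 1"
    unfolding A_def W_def using bernstein_weight_bounds(1)[OF x] sum_bernstein_weights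
    by (auto intro: finite_PiE)
  have "\<bar>(\<Sum>k\<in>A. C * nabla js F (\<xi> k) * W k) - nabla js F x\<bar>
      \<le> \<bar>C - 1\<bar> * M + e + 2 * M * sum W {k\<in>A. \<delta> \<le> edist d (\<xi> k) x}"
  proof (rule abs_weighted_sum_sub_le[OF A])
    show "\<bar>nabla js F (\<xi> k) - nabla js F x\<bar> \<le> e" if "k \<in> A" "\<not> \<delta> \<le> edist d (\<xi> k) x" for k
      using near[OF \<xi>(1)] that by simp
  qed (use M \<xi>(1) x e in auto)
  moreover have "\<bar>C - 1\<bar> * M \<le> 15 / real (n + 2) * M"
    using abs_degree_factor_scaled_sub_le[of "rev js" n] js n M[OF x] unfolding C_def
    by (intro mult_right_mono) auto
  moreover have "sum W {k\<in>A. \<delta> \<le> edist d (\<xi> k) x} \<le> real d / \<eta>\<^sup>2 / (real n - 3)"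
    unfolding A_def W_def using sum_bernstein_weights_far_points_le[where \<xi> = \<xi>, OF js(2) d n x \<xi>2 \<eta>] .
  then have "2 * M * sum W {k\<in>A. \<delta> \<le> edist d (\<xi> k) x} \<le> 2 * M * (real d / \<eta>\<^sup>2 / (real n - 3))"
    using M[OF x] by (intro mult_left_mono) auto
  ultimately show ?thesis unfolding \<xi>(3) by linarith
qed

lemma bernstein_approx_nabla_uniform:
  assumes d: "0 < d" and F: "has_partials d (open_cube d) (length js) F"
    and uc: "ucont_on d (open_cube d) (nabla js F)" and js: "set js \<subseteq> {..<d}" "length js \<le> 3"
    and \<epsilon>: "0 < \<epsilon>"
  shows "\<forall>\<^sub>F n in sequentially. \<forall>x\<in>open_cube d. \<bar>nabla js (bernstein_approx d n F) x - nabla js F x\<bar> \<le> \<epsilon>"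
proof -
  obtain M where M: "\<And>y. y \<in> open_cube d \<Longrightarrow> \<bar>nabla js F y\<bar> \<le> M"
    using ucont_on_open_cube_bounded[OF uc] by blast
  have "0 < \<epsilon> / 3" using \<epsilon> by simp
  then obtain \<delta> where \<delta>: "0 < \<delta>" "\<forall>x\<in>open_cube d. \<forall>y\<in>open_cube d. edist d x y < \<delta>
      \<longrightarrow> \<bar>nabla js F x - nabla js F y\<bar> < \<epsilon> / 3"
    using uc unfolding ucont_on_def by blast
  define \<eta> where "\<eta> = \<delta> / (2 * real d)"
  have \<eta>: "0 < \<eta>" "real d * (\<eta> + \<eta>) = \<delta>" unfolding \<eta>_def using \<delta>(1) d by auto
  have "(\<lambda>n. 7 / real (n + 2)) \<longlonglongrightarrow> 0" "(\<lambda>n. 15 / real (n + 2) * M) \<longlonglongrightarrow> 0"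
    "(\<lambda>n. 2 * M * (real d / \<eta>\<^sup>2 / (real n - 3))) \<longlonglongrightarrow> 0"
    by real_asymp+
  then have "\<forall>\<^sub>F n in sequentially. 4 \<le> n \<and> 7 / real (n + 2) < \<eta> \<and> 15 / real (n + 2) * M < \<epsilon> / 3
      \<and> 2 * M * (real d / \<eta>\<^sup>2 / (real n - 3)) < \<epsilon> / 3"
    using \<eta>(1) \<open>0 < \<epsilon> / 3\<close> by (intro eventually_conj eventually_ge_at_top order_tendstoD(2))
  then show ?thesis
  proof (rule eventually_mono, intro ballI)
    fix n x assume n: "4 \<le> n \<and> 7 / real (n + 2) < \<eta> \<and> 15 / real (n + 2) * M < \<epsilon> / 3
      \<and> 2 * M * (real d / \<eta>\<^sup>2 / (real n - 3)) < \<epsilon> / 3" and x: "x \<in> open_cube d"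
    have "real d * (\<eta> + 7 / real (n + 2)) \<le> real d * (\<eta> + \<eta>)"
      using n by (intro mult_left_mono) auto
    then have "\<bar>nabla js (bernstein_approx d n F) x - nabla js F x\<bar>
        \<le> 15 / real (n + 2) * M + \<epsilon> / 3 + 2 * M * (real d / \<eta>\<^sup>2 / (real n - 3))"
    proof (intro abs_nabla_bernstein_approx_sub_le[OF F js d _ x M])
      show "\<bar>nabla js F y - nabla js F x\<bar> \<le> \<epsilon> / 3" if "y \<in> open_cube d" "edist d y x < \<delta>" for y
        using \<delta>(2) that x by fastforce
    qed (use n \<eta> \<epsilon> in auto)
    then show "\<bar>nabla js (bernstein_approx d n F) x - nabla js F x\<bar> \<le> \<epsilon>" using n by linarith
  qed
qed

section \<open>Convergence in \<open>C\<^sup>2\<^sup>,\<^sup>1\<close>\<close>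

lemma is_Ck_imp_has_partials:
  assumes "is_Ck d p k f" "c < p"
  shows "has_partials d (open_cube d) k (\<lambda>x. f x c)"
  using assms unfolding is_Ck_def has_partials_def by auto

lemma Ck_alpha_norm_2_1_bounds:
  fixes H :: "(nat \<Rightarrow> real) \<Rightarrow> (nat \<Rightarrow> real)"
  assumes d: "0 < d" and p: "0 < p"
    and B: "\<And>c js x. c < p \<Longrightarrow> set js \<subseteq> {..<d} \<Longrightarrow> length js \<le> 2 \<Longrightarrow> x \<in> open_cube d \<Longrightarrow>
      \<bar>nabla js (\<lambda>x. H x c) x\<bar> \<le> B"
    and L: "\<And>v. v \<in> holder_quots d p 2 1 H \<Longrightarrow> v \<le> L"
  shows "0 \<le> Ck_alpha_norm d p 2 1 H" "Ck_alpha_norm d p 2 1 H \<le> B + L"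
proof -
  define x0 where "x0 = (\<lambda>i. if i < d then 1 / 2 else (0::real))"
  define x1 where "x1 = (\<lambda>i. if i < d then 1 / 4 else (0::real))"
  have x01: "x0 \<in> open_cube d" "x1 \<in> open_cube d" "x0 \<noteq> x1"
    using d unfolding x0_def x1_def open_cube_def by (auto simp: fun_eq_iff)
  define S where "S = {\<bar>nabla js (\<lambda>x. H x c) x\<bar> | c js x.
      c < p \<and> set js \<subseteq> {..<d} \<and> length js \<le> 2 \<and> x \<in> open_cube d}"
  have S0: "\<bar>nabla [] (\<lambda>x. H x 0) x0\<bar> \<in> S"
    unfolding S_def using p x01(1) by (intro CollectI exI[of _ 0] exI[of _ "[]"] exI[of _ x0]) auto
  have SB: "v \<le> B" if "v \<in> S" for v
    using that B unfolding S_def by fastforce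
  have Q0: "\<bar>nabla [0, 0] (\<lambda>x. H x 0) x0 - nabla [0, 0] (\<lambda>x. H x 0) x1\<bar> / edist d x0 x1 powr 1
      \<in> holder_quots d p 2 1 H"
    unfolding holder_quots_def using p d x01 by fastforce
  have "0 \<le> Sup S" using S0 SB by (intro cSup_upper2[OF S0] bdd_aboveI) auto
  moreover have "Sup S \<le> B" using S0 SB by (intro cSup_least) auto
  moreover have "0 \<le> Sup (holder_quots d p 2 1 H)"
    using L by (intro cSup_upper2[OF Q0] bdd_aboveI) auto
  moreover have "Sup (holder_quots d p 2 1 H) \<le> L" using Q0 L by (intro cSup_least) auto
  moreover have "Ck_alpha_norm d p 2 1 H = Sup S + Sup (holder_quots d p 2 1 H)"
    unfolding Ck_alpha_norm_def Ck_norm_def S_def ..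
  ultimately show "0 \<le> Ck_alpha_norm d p 2 1 H" "Ck_alpha_norm d p 2 1 H \<le> B + L"
    by linarith+
qed

text \<open>By the mean value theorem along coordinate paths, the bound on the third derivatives
  makes the second derivatives Lipschitz with constant \<open>d B\<close>.\<close>

lemma Ck_alpha_2_1_of_bounded_partials:
  fixes H :: "(nat \<Rightarrow> real) \<Rightarrow> (nat \<Rightarrow> real)"
  assumes d: "0 < d" and p: "0 < p"
    and H: "\<And>c. c < p \<Longrightarrow> has_partials d (open_cube d) 3 (\<lambda>x. H x c)"
    and B: "\<And>c js x. c < p \<Longrightarrow> set js \<subseteq> {..<d} \<Longrightarrow> length js \<le> 3 \<Longrightarrow> x \<in> open_cube d \<Longrightarrow>
      \<bar>nabla js (\<lambda>x. H x c) x\<bar> \<le> B"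
  shows "is_Ck_alpha d p 2 1 H" "0 \<le> Ck_alpha_norm d p 2 1 H" "Ck_alpha_norm d p 2 1 H \<le> B + real d * B"
proof -
  have "(\<lambda>i. if i < d then 1 / 2 else 0) \<in> open_cube d" unfolding open_cube_def by auto
  then have B0: "0 \<le> B" using B[of 0 "[]"] p by fastforce
  have lip: "\<bar>nabla js (\<lambda>x. H x c) x - nabla js (\<lambda>x. H x c) y\<bar> \<le> real d * B * edist d x y"
    if "c < p" "set js \<subseteq> {..<d}" "length js \<le> 2" "x \<in> open_cube d" "y \<in> open_cube d" for c js x y
    using that by (intro lipschitz_open_cube[where G'="\<lambda>i. nabla (i # js) (\<lambda>x. H x c)"]
        has_partialsD[OF H] B) auto
  have quot: "v \<le> real d * B" if vQ: "v \<in> holder_quots d p 2 1 H" for v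
  proof -
    obtain c js x y where v: "v = \<bar>nabla js (\<lambda>x. H x c) x - nabla js (\<lambda>x. H x c) y\<bar> / edist d x y powr 1"
      and cjs: "c < p" "set js \<subseteq> {..<d}" "length js = 2" and xy: "x \<in> open_cube d" "y \<in> open_cube d" "x \<noteq> y"
      using vQ unfolding holder_quots_def by blast
    then show ?thesis using lip[of c js x y] edist_pos[OF xy] by (simp add: divide_le_eq)
  qed
  have "ucont_on d (open_cube d) (nabla js (\<lambda>x. H x c))"
    if "c < p" "set js \<subseteq> {..<d}" "length js \<le> 2" for c js
    using that lip B0 by (intro ucont_on_lipschitz[of _ _ "real d * B"]) auto
  moreover have "((\<lambda>t. nabla js (\<lambda>x. H x c) (x(i := x i + t))) has_real_derivative
      nabla (i # js) (\<lambda>x. H x c) x) (at 0)"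
    if "c < p" "set js \<subseteq> {..<d}" "length js < 2" "i < d" "x \<in> open_cube d" for c js i x
    using that by (intro has_partialsD[OF H]) auto
  ultimately have "is_Ck d p 2 H" unfolding is_Ck_def by blast
  moreover have "bdd_above (holder_quots d p 2 1 H)" using quot by (rule bdd_aboveI)
  ultimately show "is_Ck_alpha d p 2 1 H" unfolding is_Ck_alpha_def ..
  show "0 \<le> Ck_alpha_norm d p 2 1 H" "Ck_alpha_norm d p 2 1 H \<le> B + real d * B"
    using Ck_alpha_norm_2_1_bounds[OF d p _ quot, where B = B] B by auto
qed

lemma bernstein_polys_partials_bounded:
  fixes p :: nat
  shows "\<exists>B. \<forall>c<p. \<forall>js. set js \<subseteq> {..<d} \<longrightarrow> length js \<le> r \<longrightarrow>
     (\<forall>x\<in>open_cube d. \<bar>nabla js (bernstein_poly d (ma c)) x\<bar> \<le> B)"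
proof -
  define J where "J = {js. set js \<subseteq> {..<d} \<and> length js \<le> r}"
  define b where "b c js = (\<Sum>k\<in>(\<Pi>\<^sub>E i\<in>{..<d}. {..fst (nabla_coeffs js (ma c)) i}).
      \<bar>snd (nabla_coeffs js (ma c)) k\<bar>)" for c js
  have b0: "0 \<le> b c js" for c js unfolding b_def by (simp add: sum_nonneg)
  have "finite J" unfolding J_def by (rule finite_lists_length_le) simp
  have total: "b c js \<le> (\<Sum>c<p. \<Sum>js\<in>J. b c js)" if "c < p" "js \<in> J" for c js
  proof -
    have "b c js \<le> (\<Sum>js\<in>J. b c js)" using that \<open>finite J\<close> b0 by (intro member_le_sum) auto
    also have "\<dots> \<le> (\<Sum>c<p. \<Sum>js\<in>J. b c js)"
      using that b0 by (intro member_le_sum[of c "{..<p}" "\<lambda>c. \<Sum>js\<in>J. b c js"] sum_nonneg) auto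
    finally show ?thesis .
  qed
  have single: "\<bar>nabla js (bernstein_poly d (ma c)) x\<bar> \<le> b c js"
    if "set js \<subseteq> {..<d}" "x \<in> open_cube d" for c js x
    using abs_bernstein_poly_le[OF that(2), of "fst (nabla_coeffs js (ma c))" "snd (nabla_coeffs js (ma c))"]
    unfolding nabla_bernstein_poly[OF that(1)] b_def by simp
  show ?thesis
  proof (intro exI allI impI ballI)
    fix c js x assume "c < p" "set js \<subseteq> {..<d}" "length js \<le> r" "x \<in> open_cube d"
    then show "\<bar>nabla js (bernstein_poly d (ma c)) x\<bar> \<le> (\<Sum>c<p. \<Sum>js\<in>J. b c js)"
      by (intro order_trans[OF single total]) (auto simp: J_def)
  qed
qed

lemma recu_realizable_bernstein_poly:
  assumes "0 < d"
  shows "recu_realizable d (bernstein_poly d ma)"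
proof -
  have "recu_realizable d (\<lambda>x. Bernstein (fst ma i) (k i) (x i))" if "i < d" for i k
  proof -
    have "recu_realizable d (\<lambda>x. real (fst ma i choose k i) * x i ^ k i * (1 + (- 1) * x i) ^ (fst ma i - k i))"
      using assms recu_realizable_coord[OF that]
      by (intro recu_realizable_mult recu_realizable_const recu_realizable_power recu_realizable_add)
    then show ?thesis unfolding Bernstein_def by simp
  qed
  then have "recu_realizable d (\<lambda>x. \<Sum>k\<in>(\<Pi>\<^sub>E i\<in>{..<d}. {..fst ma i}).
      snd ma k * (\<Prod>i<d. Bernstein (fst ma i) (k i) (x i)))"
    using assms
    by (intro recu_realizable_sum recu_realizable_mult recu_realizable_const recu_realizable_prod finite_PiE)
      auto
  then show ?thesis unfolding bernstein_poly_def[abs_def] .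
qed

lemma recu_nets_bernstein_approx:
  assumes "0 < d" "0 < p"
  shows "\<exists>arch Ls. \<forall>n. nn_arch_ok d p (arch n) (Ls n) \<and>
    (\<forall>x c. c < p \<longrightarrow> nn_eval recu (arch n) (Ls n) x c = bernstein_approx d n (F c) x)"
proof -
  have "\<forall>n. \<exists>arch_Ls. nn_arch_ok d p (fst arch_Ls) (snd arch_Ls) \<and>
      (\<forall>x c. c < p \<longrightarrow> nn_eval recu (fst arch_Ls) (snd arch_Ls) x c = bernstein_approx d n (F c) x)"
  proof
    fix n
    have "recu_net d p (\<lambda>x c. bernstein_approx d n (F c) x)"
      using assms recu_realizable_bernstein_poly unfolding bernstein_approx_def
      by (intro recu_net_components) auto
    then show "\<exists>arch_Ls. nn_arch_ok d p (fst arch_Ls) (snd arch_Ls) \<and>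
      (\<forall>x c. c < p \<longrightarrow> nn_eval recu (fst arch_Ls) (snd arch_Ls) x c = bernstein_approx d n (F c) x)"
      unfolding recu_net_def recu_net_depth_def by auto
  qed
  then obtain N where "\<forall>n. nn_arch_ok d p (fst (N n)) (snd (N n)) \<and>
      (\<forall>x c. c < p \<longrightarrow> nn_eval recu (fst (N n)) (snd (N n)) x c = bernstein_approx d n (F c) x)"
    by (metis choice)
  then show ?thesis by (intro exI[of _ "\<lambda>n. fst (N n)"] exI[of _ "\<lambda>n. snd (N n)"])
qed

lemma tendsto_Ck_alpha_norm_2_1_zero:
  assumes d: "0 < d" and p: "0 < p"
    and H: "\<And>n c. c < p \<Longrightarrow> has_partials d (open_cube d) 3 (\<lambda>x. H n x c)"
    and small: "\<And>e. 0 < e \<Longrightarrow> \<forall>\<^sub>F n in sequentially. \<forall>c<p. \<forall>js. set js \<subseteq> {..<d} \<longrightarrow> length js \<le> 3 \<longrightarrow>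
      (\<forall>x\<in>open_cube d. \<bar>nabla js (\<lambda>x. H n x c) x\<bar> \<le> e)"
  shows "(\<lambda>n. Ck_alpha_norm d p 2 1 (H n)) \<longlonglongrightarrow> 0"
  unfolding tendsto_iff dist_real_def
proof (intro allI impI)
  fix r :: real assume r: "0 < r"
  define e where "e = r / (2 * (real d + 1))"
  have "e + real d * e = (real d + 1) * e" by (simp add: algebra_simps)
  also have "\<dots> = r / 2" unfolding e_def by (simp add: field_simps add_pos_pos)
  finally have "e + real d * e < r" using r by simp
  moreover have "0 < e" unfolding e_def using r by simp
  ultimately have e: "0 < e" "e + real d * e < r" by auto
  show "\<forall>\<^sub>F n in sequentially. \<bar>Ck_alpha_norm d p 2 1 (H n) - 0\<bar> < r"
    using small[OF e(1)]
  proof (rule eventually_mono)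
    fix n assume "\<forall>c<p. \<forall>js. set js \<subseteq> {..<d} \<longrightarrow> length js \<le> 3 \<longrightarrow>
      (\<forall>x\<in>open_cube d. \<bar>nabla js (\<lambda>x. H n x c) x\<bar> \<le> e)"
    then have "0 \<le> Ck_alpha_norm d p 2 1 (H n)" "Ck_alpha_norm d p 2 1 (H n) \<le> e + real d * e"
      using Ck_alpha_2_1_of_bounded_partials(2,3)[OF d p H[where n = n], where B = e] by auto
    then show "\<bar>Ck_alpha_norm d p 2 1 (H n) - 0\<bar> < r" using e by simp
  qed
qed

lemma bernstein_approx_C3_convergence:
  fixes p :: nat
  assumes d: "0 < d" and F: "\<And>c. c < p \<Longrightarrow> has_partials d (open_cube d) 3 (F c)"
    and uc: "\<And>c js. c < p \<Longrightarrow> set js \<subseteq> {..<d} \<Longrightarrow> length js \<le> 3 \<Longrightarrow> ucont_on d (open_cube d) (nabla js (F c))"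
    and e: "0 < e"
  shows "\<forall>\<^sub>F n in sequentially. \<forall>c<p. \<forall>js. set js \<subseteq> {..<d} \<longrightarrow> length js \<le> 3 \<longrightarrow>
    (\<forall>x\<in>open_cube d. \<bar>nabla js (\<lambda>x. F c x - bernstein_approx d n (F c) x) x\<bar> \<le> e)"
proof -
  define T where "T = {..<p} \<times> {js. set js \<subseteq> {..<d} \<and> length js \<le> 3}"
  have "finite T" unfolding T_def by (intro finite_cartesian_product finite_lists_length_le) auto
  moreover have "\<forall>\<^sub>F n in sequentially. \<forall>x\<in>open_cube d.
      \<bar>nabla js (bernstein_approx d n (F c)) x - nabla js (F c) x\<bar> \<le> e" if "(c, js) \<in> T" for c js
    using that F uc e unfolding T_def
    by (intro bernstein_approx_nabla_uniform[OF d has_partials_mono]) auto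
  ultimately have "\<forall>\<^sub>F n in sequentially. \<forall>(c, js)\<in>T. \<forall>x\<in>open_cube d.
      \<bar>nabla js (bernstein_approx d n (F c)) x - nabla js (F c) x\<bar> \<le> e"
    by (auto simp: eventually_ball_finite_distrib)
  then show ?thesis
  proof (rule eventually_mono, intro allI impI ballI)
    fix n c js x
    assume n: "\<forall>(c, js)\<in>T. \<forall>x\<in>open_cube d. \<bar>nabla js (bernstein_approx d n (F c)) x - nabla js (F c) x\<bar> \<le> e"
      and cjs: "c < p" "set js \<subseteq> {..<d}" "length js \<le> 3" and x: "x \<in> open_cube d"
    have "nabla js (\<lambda>x. F c x - bernstein_approx d n (F c) x) x
        = nabla js (F c) x - nabla js (bernstein_approx d n (F c)) x"
      using cjs x unfolding bernstein_approx_def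
      by (intro nabla_diff[OF coord_open_open_cube F has_partials_bernstein_poly])
    then show "\<bar>nabla js (\<lambda>x. F c x - bernstein_approx d n (F c) x) x\<bar> \<le> e"
      using n cjs x unfolding T_def by (auto simp: abs_minus_commute)
  qed
qed

lemma is_Ck_alpha_2_1_bernstein_approx:
  assumes d: "0 < d" and p: "0 < p"
    and H: "\<And>c. c < p \<Longrightarrow> (\<lambda>x. H x c) = bernstein_approx d n (F c)"
  shows "is_Ck_alpha d p 2 1 H"
proof -
  obtain B where B: "\<forall>c<p. \<forall>js. set js \<subseteq> {..<d} \<longrightarrow> length js \<le> 3 \<longrightarrow> (\<forall>x\<in>open_cube d.
      \<bar>nabla js (bernstein_poly d (\<lambda>_. n, \<lambda>k. F c (bernstein_node n d k))) x\<bar> \<le> B)"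
    using bernstein_polys_partials_bounded[where ma = "\<lambda>c. (\<lambda>_. n, \<lambda>k. F c (bernstein_node n d k))"]
    by blast
  show ?thesis
  proof (rule Ck_alpha_2_1_of_bounded_partials(1)[OF d p])
    show "\<bar>nabla js (\<lambda>x. H x c) x\<bar> \<le> B"
      if "c < p" "set js \<subseteq> {..<d}" "length js \<le> 3" "x \<in> open_cube d" for c js x
      using B that unfolding H[OF that(1)] bernstein_approx_def by blast
  qed (simp add: H bernstein_approx_def has_partials_bernstein_poly)
qed

lemma tendsto_Ck_alpha_norm_sub_bernstein_approx:
  assumes d: "0 < d" and p: "0 < p" and f: "is_Ck d p 3 f"
    and H: "\<And>n c. c < p \<Longrightarrow> (\<lambda>x. H n x c) = bernstein_approx d n (\<lambda>x. f x c)"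
  shows "(\<lambda>n. Ck_alpha_norm d p 2 1 (\<lambda>x. f x - H n x)) \<longlonglongrightarrow> 0"
proof (rule tendsto_Ck_alpha_norm_2_1_zero[OF d p])
  define F where "F c = (\<lambda>x. f x c)" for c
  have F: "\<And>c. c < p \<Longrightarrow> has_partials d (open_cube d) 3 (F c)"
    unfolding F_def using is_Ck_imp_has_partials[OF f] .
  have diff: "(\<lambda>x. f x c - H n x c) = (\<lambda>x. F c x - bernstein_approx d n (F c) x)" if "c < p" for n c
    using fun_cong[OF H[OF that]] unfolding F_def by auto
  show "has_partials d (open_cube d) 3 (\<lambda>x. (f x - H n x) c)" if "c < p" for n c
    unfolding minus_apply diff[OF that] bernstein_approx_def
    by (rule has_partials_diff[OF coord_open_open_cube F[OF that] has_partials_bernstein_poly])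
  have uc: "ucont_on d (open_cube d) (nabla js (F c))" if "c < p" "set js \<subseteq> {..<d}" "length js \<le> 3" for c js
    using f that unfolding is_Ck_def F_def by auto
  have conv: "\<forall>\<^sub>F n in sequentially. \<forall>c<p. \<forall>js. set js \<subseteq> {..<d} \<longrightarrow> length js \<le> 3 \<longrightarrow>
      (\<forall>x\<in>open_cube d. \<bar>nabla js (\<lambda>x. F c x - bernstein_approx d n (F c) x) x\<bar> \<le> e)"
    if "0 < e" for e
    by (rule bernstein_approx_C3_convergence[OF d _ _ that]) (use F uc in auto)
  show "\<forall>\<^sub>F n in sequentially. \<forall>c<p. \<forall>js. set js \<subseteq> {..<d} \<longrightarrow> length js \<le> 3 \<longrightarrow>
      (\<forall>x\<in>open_cube d. \<bar>nabla js (\<lambda>x. (f x - H n x) c) x\<bar> \<le> e)"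
    if "0 < e" for e
    using conv[OF that]
  proof (rule eventually_mono, intro allI impI)
    fix n c js
    assume "\<forall>c<p. \<forall>js. set js \<subseteq> {..<d} \<longrightarrow> length js \<le> 3 \<longrightarrow>
        (\<forall>x\<in>open_cube d. \<bar>nabla js (\<lambda>x. F c x - bernstein_approx d n (F c) x) x\<bar> \<le> e)"
      and "c < p" "set js \<subseteq> {..<d}" "length js \<le> 3"
    then show "\<forall>x\<in>open_cube d. \<bar>nabla js (\<lambda>x. (f x - H n x) c) x\<bar> \<le> e"
      unfolding minus_apply diff[OF \<open>c < p\<close>] by blast
  qed
qed

theorem proposition2:
  fixes \<alpha> :: real and d p :: nat and f :: "(nat \<Rightarrow> real) \<Rightarrow> (nat \<Rightarrow> real)"
  assumes "0 < \<alpha>" "\<alpha> \<le> 1" "d \<ge> 1" "p \<ge> 1"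
    and "is_Ck_alpha d p 3 \<alpha> f"
  shows "\<exists>(arch :: nat \<Rightarrow> nat list) (Ls :: nat \<Rightarrow> layer list).
           (\<forall>n. nn_arch_ok d p (arch n) (Ls n) \<and>
                is_Ck_alpha d p 2 1 (nn_eval recu (arch n) (Ls n))) \<and>
           (\<lambda>n. Ck_alpha_norm d p 2 1 (\<lambda>x. f x - nn_eval recu (arch n) (Ls n) x)) \<longlonglongrightarrow> 0"
proof -
  have d: "0 < d" and p: "0 < p" and f: "is_Ck d p 3 f"
    using assms unfolding is_Ck_alpha_def by auto
  obtain arch Ls where "\<forall>n. nn_arch_ok d p (arch n) (Ls n) \<and>
      (\<forall>x c. c < p \<longrightarrow> nn_eval recu (arch n) (Ls n) x c = bernstein_approx d n (\<lambda>x. f x c) x)"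
    using recu_nets_bernstein_approx[OF d p, where F = "\<lambda>c x. f x c"] by blast
  then have net: "\<And>n. nn_arch_ok d p (arch n) (Ls n)"
    and eval: "\<And>n c. c < p \<Longrightarrow> (\<lambda>x. nn_eval recu (arch n) (Ls n) x c) = bernstein_approx d n (\<lambda>x. f x c)"
    by (auto simp: fun_eq_iff)
  have "is_Ck_alpha d p 2 1 (nn_eval recu (arch n) (Ls n))" for n
    by (rule is_Ck_alpha_2_1_bernstein_approx[OF d p, where F = "\<lambda>c x. f x c"]) (rule eval)
  moreover have "(\<lambda>n. Ck_alpha_norm d p 2 1 (\<lambda>x. f x - nn_eval recu (arch n) (Ls n) x)) \<longlonglongrightarrow> 0"
    by (rule tendsto_Ck_alpha_norm_sub_bernstein_approx[OF d p f]) (rule eval)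
  ultimately show ?thesis using net by (intro exI[of _ arch] exI[of _ Ls]) simp
qed

end
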